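(* Let $f\colon (B,C)\to (X,A)$ be a map of pairs of topological spaces and let $f^*\colon H^*(X,A)\to H^*(B,C)$ be the induced homomorphism in singular cohomology (with coefficients in a commutative ring). Then $\operatorname{nil}\operatorname{Im}(f^* )\le \operatorname{relcat}(f)$.
   Context: For a (possibly non-unital) commutative ring $R$, the nilpotency index $\operatorname{nil}R$ is the non-negative integer $n$ such that $R^n\neq 0$ but $R^{n+1}=0$, where $R^k$ denotes the set of sums of $k$-fold products; here $\operatorname{Im}(f^* )\subseteq H^*(B,C)$ with the cup product. A map of pairs $h\colon (P,Q)\to (X,A)$ is relatively inessential if there is a homotopy $K\colon P\times[0,1]\to X$ with $K(-,1)=h$, $K(P,0)\subseteq A$ and $K(Q,t)\subseteq A$ for all $t$. $\operatorname{relcat}(f)$ is the least $\ell\ge0$ such that $B$ has an open cover $B_0,\dots,B_\ell$ with each $f|_{(B_i,B_i\cap C)}\colon(B_i,B_i\cap C)\to(X,A)$ relatively inessential ($\infty$ if none exists). *)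

theory Defs
  imports "HOL-Homology.Homology" "HOL-Library.Extended_Nat"
begin

definition cochain :: "nat \<Rightarrow> 'a topology \<Rightarrow> (((nat \<Rightarrow> real) \<Rightarrow> 'a) \<Rightarrow> 'r::comm_ring_1) \<Rightarrow> bool" where
  "cochain p X c \<longleftrightarrow> (\<forall>\<sigma>. \<not> singular_simplex p X \<sigma> \<longrightarrow> c \<sigma> = 0)"

definition relcochain :: "nat \<Rightarrow> 'a topology \<Rightarrow> 'a set \<Rightarrow> (((nat \<Rightarrow> real) \<Rightarrow> 'a) \<Rightarrow> 'r::comm_ring_1) \<Rightarrow> bool" where
  "relcochain p X A c \<longleftrightarrow> cochain p X c \<and> (\<forall>\<sigma>. singular_simplex p (subtopology X A) \<sigma> \<longrightarrow> c \<sigma> = 0)"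

definition coboundary :: "nat \<Rightarrow> 'a topology \<Rightarrow> (((nat \<Rightarrow> real) \<Rightarrow> 'a) \<Rightarrow> 'r::comm_ring_1)
    \<Rightarrow> ((nat \<Rightarrow> real) \<Rightarrow> 'a) \<Rightarrow> 'r" where
  "coboundary p X c \<sigma> =
     (if singular_simplex (Suc p) X \<sigma>
      then (\<Sum>k\<le>Suc p. (-1) ^ k * c (singular_face (Suc p) k \<sigma>)) else 0)"

definition relcocycle :: "nat \<Rightarrow> 'a topology \<Rightarrow> 'a set \<Rightarrow> (((nat \<Rightarrow> real) \<Rightarrow> 'a) \<Rightarrow> 'r::comm_ring_1) \<Rightarrow> bool" where
  "relcocycle p X A c \<longleftrightarrow> relcochain p X A c \<and> coboundary p X c = (\<lambda>\<sigma>. 0)"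

definition relcoboundary :: "nat \<Rightarrow> 'a topology \<Rightarrow> 'a set \<Rightarrow> (((nat \<Rightarrow> real) \<Rightarrow> 'a) \<Rightarrow> 'r::comm_ring_1) \<Rightarrow> bool" where
  "relcoboundary p X A c \<longleftrightarrow>
     (p = 0 \<and> c = (\<lambda>\<sigma>. 0)) \<or>
     (\<exists>q b. p = Suc q \<and> relcochain q X A b \<and> c = coboundary q X b)"

definition front_face :: "nat \<Rightarrow> ((nat \<Rightarrow> real) \<Rightarrow> 'a) \<Rightarrow> (nat \<Rightarrow> real) \<Rightarrow> 'a" where
  "front_face p \<sigma> = restrict \<sigma> (standard_simplex p)"

definition back_face :: "nat \<Rightarrow> nat \<Rightarrow> ((nat \<Rightarrow> real) \<Rightarrow> 'a) \<Rightarrow> (nat \<Rightarrow> real) \<Rightarrow> 'a" where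
  "back_face p q \<sigma> =
     restrict (\<sigma> \<circ> (\<lambda>y i. if i < p then 0 else y (i - p))) (standard_simplex q)"

definition cup :: "nat \<Rightarrow> nat \<Rightarrow> 'a topology \<Rightarrow> (((nat \<Rightarrow> real) \<Rightarrow> 'a) \<Rightarrow> 'r::comm_ring_1)
    \<Rightarrow> (((nat \<Rightarrow> real) \<Rightarrow> 'a) \<Rightarrow> 'r) \<Rightarrow> ((nat \<Rightarrow> real) \<Rightarrow> 'a) \<Rightarrow> 'r" where
  "cup p q X c d \<sigma> =
     (if singular_simplex (p + q) X \<sigma> then c (front_face p \<sigma>) * d (back_face p q \<sigma>) else 0)"

fun cup_list :: "'a topology \<Rightarrow> (nat \<times> (((nat \<Rightarrow> real) \<Rightarrow> 'a) \<Rightarrow> 'r::comm_ring_1)) list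
    \<Rightarrow> nat \<times> (((nat \<Rightarrow> real) \<Rightarrow> 'a) \<Rightarrow> 'r)" where
  "cup_list X [] = (0, (\<lambda>\<sigma>. if singular_simplex 0 X \<sigma> then 1 else 0))"
| "cup_list X [pc] = pc"
| "cup_list X (pc # rest) =
     (let qd = cup_list X rest in (fst pc + fst qd, cup (fst pc) (fst qd) X (snd pc) (snd qd)))"

definition pullback :: "nat \<Rightarrow> 'b topology \<Rightarrow> ('b \<Rightarrow> 'a) \<Rightarrow> (((nat \<Rightarrow> real) \<Rightarrow> 'a) \<Rightarrow> 'r::comm_ring_1)
    \<Rightarrow> ((nat \<Rightarrow> real) \<Rightarrow> 'b) \<Rightarrow> 'r" where
  "pullback p B f c \<sigma> = (if singular_simplex p B \<sigma> then c (simplex_map p f \<sigma>) else 0)"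

text \<open>(Im f^* )^k = 0, where Im f^* is a subring of H^*(B,C;R): every k-fold cup product
  of elements of Im f^* vanishes. Since f^* preserves degree and the cup product is
  multilinear, it suffices (and is equivalent) to ask this for homogeneous classes
  f^*[c_1],...,f^*[c_k], [c_i] in H^{p_i}(X,A;R); a class is zero iff a (any)
  representing relative cocycle is a relative coboundary.\<close>
definition image_power_zero ::
  "'r::comm_ring_1 itself \<Rightarrow> 'b topology \<Rightarrow> 'b set \<Rightarrow> 'a topology \<Rightarrow> 'a set \<Rightarrow> ('b \<Rightarrow> 'a) \<Rightarrow> nat \<Rightarrow> bool" where
  "image_power_zero R B C X A f k \<longleftrightarrow>
     (\<forall>cs :: (nat \<times> (((nat \<Rightarrow> real) \<Rightarrow> 'a) \<Rightarrow> 'r)) list.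
        length cs = k \<longrightarrow> (\<forall>(p, c) \<in> set cs. relcocycle p X A c) \<longrightarrow>
        (let pr = cup_list B (map (\<lambda>(p, c). (p, pullback p B f c)) cs)
         in relcoboundary (fst pr) B C (snd pr)))"

text \<open>nil of Im f^*: the n with (Im f^* )^n \<noteq> 0 and (Im f^* )^(n+1) = 0, i.e. the least n
  with (Im f^* )^(n+1) = 0; infinity if no such n exists.\<close>
definition nil_image ::
  "'r::comm_ring_1 itself \<Rightarrow> 'b topology \<Rightarrow> 'b set \<Rightarrow> 'a topology \<Rightarrow> 'a set \<Rightarrow> ('b \<Rightarrow> 'a) \<Rightarrow> enat" where
  "nil_image R B C X A f = Inf {enat n | n. image_power_zero R B C X A f (Suc n)}"

text \<open>Relatively inessential maps of pairs, with (P,Q) = (subspace U of B, U \<inter> C).\<close>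
definition rel_inessential ::
  "'b topology \<Rightarrow> 'b set \<Rightarrow> 'b set \<Rightarrow> 'a topology \<Rightarrow> 'a set \<Rightarrow> ('b \<Rightarrow> 'a) \<Rightarrow> bool" where
  "rel_inessential B U C X A h \<longleftrightarrow>
     (\<exists>K. continuous_map (prod_topology (subtopology B U) (top_of_set {0..1::real})) X K \<and>
          (\<forall>x\<in>topspace B \<inter> U. K (x, 1) = h x) \<and>
          (\<forall>x\<in>topspace B \<inter> U. K (x, 0) \<in> A) \<and>
          (\<forall>x\<in>topspace B \<inter> U \<inter> C. \<forall>t\<in>{0..1}. K (x, t) \<in> A))"

definition relcat :: "'b topology \<Rightarrow> 'b set \<Rightarrow> 'a topology \<Rightarrow> 'a set \<Rightarrow> ('b \<Rightarrow> 'a) \<Rightarrow> enat" where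
  "relcat B C X A f = Inf {enat l | l. \<exists>U :: nat \<Rightarrow> 'b set.
       (\<forall>i\<le>l. openin B (U i)) \<and> (\<Union>i\<le>l. U i) = topspace B \<and>
       (\<forall>i\<le>l. rel_inessential B (U i) C X A f)}"

end

theory Submission
  imports Defs
begin

definition eval_cochain :: "(((nat \<Rightarrow> real) \<Rightarrow> 'a) \<Rightarrow> 'r::comm_ring_1) \<Rightarrow> 'a chain \<Rightarrow> 'r" where
  "eval_cochain c x = (\<Sum>s\<in>Poly_Mapping.keys x. of_int (poly_mapping.lookup x s) * c s)"

lemma eval_cochain_superset:
  assumes "finite S" "Poly_Mapping.keys x \<subseteq> S"
  shows "eval_cochain c x = (\<Sum>s\<in>S. of_int (poly_mapping.lookup x s) * c s)"
  unfolding eval_cochain_def using assms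
  by (intro sum.mono_neutral_left) (auto simp: in_keys_iff)

lemma eval_cochain_0 [simp]: "eval_cochain c 0 = 0"
  by (simp add: eval_cochain_def)

lemma eval_cochain_frag_of [simp]: "eval_cochain c (frag_of s) = c s"
  by (simp add: eval_cochain_def)

lemma eval_cochain_add: "eval_cochain c (x + y) = eval_cochain c x + eval_cochain c y"
proof -
  let ?S = "Poly_Mapping.keys x \<union> Poly_Mapping.keys y"
  have "eval_cochain c (x + y) = (\<Sum>s\<in>?S. of_int (poly_mapping.lookup (x+y) s) * c s)"
    by (rule eval_cochain_superset) (auto simp: keys_add)
  also have "\<dots> = (\<Sum>s\<in>?S. of_int (poly_mapping.lookup x s) * c s) + (\<Sum>s\<in>?S. of_int (poly_mapping.lookup y s) * c s)"
    by (simp add: lookup_add distrib_right sum.distrib)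
  also have "\<dots> = eval_cochain c x + eval_cochain c y"
  proof -
    have "eval_cochain c x = (\<Sum>s\<in>?S. of_int (poly_mapping.lookup x s) * c s)"
      by (rule eval_cochain_superset) auto
    moreover have "eval_cochain c y = (\<Sum>s\<in>?S. of_int (poly_mapping.lookup y s) * c s)"
      by (rule eval_cochain_superset) auto
    ultimately show ?thesis by simp
  qed
  finally show ?thesis .
qed

lemma eval_cochain_minus: "eval_cochain c (- x) = - eval_cochain c x"
  by (simp add: eval_cochain_def sum_negf)

lemma eval_cochain_diff: "eval_cochain c (x - y) = eval_cochain c x - eval_cochain c y"
  by (metis diff_conv_add_uminus eval_cochain_add eval_cochain_minus)

lemma eval_cochain_cmul: "eval_cochain c (frag_cmul k x) = of_int k * eval_cochain c x"
proof (cases "k = 0")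
  case True then show ?thesis by simp
next
  case False
  then have "Poly_Mapping.keys (frag_cmul k x) = Poly_Mapping.keys x" by auto
  then show ?thesis by (simp add: eval_cochain_def sum_distrib_left mult.assoc)
qed

lemma eval_cochain_sum: "eval_cochain c (sum g I) = (\<Sum>i\<in>I. eval_cochain c (g i))"
  by (induction I rule: infinite_finite_induct) (auto simp: eval_cochain_add)

lemma eval_cochain_eq_0: "(\<And>s. s \<in> Poly_Mapping.keys x \<Longrightarrow> c s = 0) \<Longrightarrow> eval_cochain c x = 0"
  by (simp add: eval_cochain_def)

lemma eval_cochain_frag_extend: "eval_cochain c (frag_extend g x) = eval_cochain (\<lambda>s. eval_cochain c (g s)) x"
proof -
  have "Poly_Mapping.keys x \<subseteq> UNIV" by simp
  then show ?thesis
    by (induction x rule: frag_induction) (auto simp: frag_extend_diff eval_cochain_diff)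
qed

lemma eval_cochain_cong: "(\<And>s. s \<in> Poly_Mapping.keys x \<Longrightarrow> c s = d s) \<Longrightarrow> eval_cochain c x = eval_cochain d x"
  by (simp add: eval_cochain_def)

lemma eval_relcochain_eq_0:
  assumes "relcochain p X A c" "singular_chain p (subtopology X A) x"
  shows "eval_cochain c x = 0"
  using assms by (intro eval_cochain_eq_0) (auto simp: relcochain_def singular_chain_def)

lemma coboundary_eq_eval_cochain:
  assumes "singular_simplex (Suc p) X s"
  shows "coboundary p X c s = eval_cochain c (chain_boundary (Suc p) (frag_of s))"
  using assms unfolding coboundary_def chain_boundary_of
  by (simp add: eval_cochain_sum eval_cochain_cmul del: sum.atMost_Suc)

lemma eval_cochain_coboundary:
  assumes "singular_chain (Suc p) X x"
  shows "eval_cochain (coboundary p X c) x = eval_cochain c (chain_boundary (Suc p) x)"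
  using assms unfolding singular_chain_def
proof (induction x rule: frag_induction)
  case (one s)
  then show ?case by (simp add: coboundary_eq_eval_cochain)
next
  case (diff a b)
  then show ?case by (simp add: eval_cochain_diff chain_boundary_diff)
qed simp

lemma coboundary_coboundary: "coboundary (Suc q) X (coboundary q X b) = (\<lambda>s. 0)"
proof
  fix s
  show "coboundary (Suc q) X (coboundary q X b) s = 0"
  proof (cases "singular_simplex (Suc (Suc q)) X s")
    case True
    have sc: "singular_chain (Suc (Suc q)) X (frag_of s)"
      using True by (simp add: singular_chain_of)
    have "singular_chain (Suc q) X (chain_boundary (Suc (Suc q)) (frag_of s))"
      using singular_chain_boundary[OF sc] by simp
    then have "coboundary (Suc q) X (coboundary q X b) s = eval_cochain b (chain_boundary (Suc q) (chain_boundary (Suc (Suc q)) (frag_of s)))"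
      using True by (simp add: coboundary_eq_eval_cochain eval_cochain_coboundary)
    also have "\<dots> = 0"
      using chain_boundary_boundary[OF sc] by simp
    finally show ?thesis .
  qed (simp add: coboundary_def)
qed

lemma coboundary_diff: "coboundary p X (\<lambda>s. c s - d s) = (\<lambda>s. coboundary p X c s - coboundary p X d s)"
  by (auto simp: coboundary_def fun_eq_iff sum_subtractf right_diff_distrib)

lemma coboundary_add: "coboundary p X (\<lambda>s. c s + d s) = (\<lambda>s. coboundary p X c s + coboundary p X d s)"
  by (auto simp: coboundary_def fun_eq_iff sum.distrib distrib_left)

lemma coboundary_scale: "coboundary p X (\<lambda>s. k * c s) = (\<lambda>s. k * coboundary p X c s)"
  by (auto simp: coboundary_def fun_eq_iff sum_distrib_left mult.left_commute right_diff_distrib)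

lemma coboundary_zero: "coboundary p X (\<lambda>s. 0) = (\<lambda>s. 0)"
  by (auto simp: coboundary_def fun_eq_iff)

lemma relcochain_zero: "relcochain p X A (\<lambda>s. 0)"
  by (simp add: relcochain_def cochain_def)

lemma relcochain_diff: "relcochain p X A c \<Longrightarrow> relcochain p X A d \<Longrightarrow> relcochain p X A (\<lambda>s. c s - d s)"
  by (simp add: relcochain_def cochain_def)

lemma relcochain_add: "relcochain p X A c \<Longrightarrow> relcochain p X A d \<Longrightarrow> relcochain p X A (\<lambda>s. c s + d s)"
  by (simp add: relcochain_def cochain_def)

lemma relcochain_scale: "relcochain p X A c \<Longrightarrow> relcochain p X A (\<lambda>s. k * c s)"
  by (simp add: relcochain_def cochain_def)

lemma relcochain_coboundary:
  assumes "relcochain q X A b"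
  shows "relcochain (Suc q) X A (coboundary q X b)"
  unfolding relcochain_def cochain_def
proof (intro conjI allI impI)
  fix s assume "\<not> singular_simplex (Suc q) X s"
  then show "coboundary q X b s = 0" by (simp add: coboundary_def)
next
  fix s assume s: "singular_simplex (Suc q) (subtopology X A) s"
  then have "singular_chain (Suc q) (subtopology X A) (frag_of s)" by (simp add: singular_chain_of)
  then have "singular_chain q (subtopology X A) (chain_boundary (Suc q) (frag_of s))"
    using singular_chain_boundary by fastforce
  moreover have "singular_simplex (Suc q) X s"
    using s singular_simplex_subtopology by blast
  ultimately show "coboundary q X b s = 0"
    using assms by (simp add: coboundary_eq_eval_cochain eval_relcochain_eq_0)
qed

lemma relcoboundary_coboundary: "relcochain q X A b \<Longrightarrow> relcoboundary (Suc q) X A (coboundary q X b)"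
  by (auto simp: relcoboundary_def)

lemma relcoboundary_imp_relcocycle:
  "relcoboundary p X A c \<Longrightarrow> relcocycle p X A c"
  unfolding relcoboundary_def relcocycle_def
  by (auto simp: relcochain_zero coboundary_zero relcochain_coboundary coboundary_coboundary)

lemma relcoboundary_zero: "relcoboundary p X A (\<lambda>s. 0)"
  unfolding relcoboundary_def
  by (cases p) (auto intro!: exI[of _ "\<lambda>s. 0"] simp: relcochain_zero coboundary_zero)

lemma relcoboundary_add:
  assumes "relcoboundary p X A c" "relcoboundary p X A d"
  shows "relcoboundary p X A (\<lambda>s. c s + d s)"
proof (cases p)
  case 0 then show ?thesis using assms by (simp add: relcoboundary_def)
next
  case (Suc q)
  then obtain b b' where "relcochain q X A b" "c = coboundary q X b" "relcochain q X A b'" "d = coboundary q X b'"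
    using assms by (auto simp: relcoboundary_def)
  then show ?thesis unfolding relcoboundary_def using Suc
    by (intro disjI2 exI[of _ q] exI[of _ "\<lambda>s. b s + b' s"]) (simp add: coboundary_add relcochain_add)
qed

lemma relcocycle_diff:
  assumes "relcocycle p X A c" "relcocycle p X A d"
  shows "relcocycle p X A (\<lambda>s. c s - d s)"
  using assms unfolding relcocycle_def
  by (auto simp: coboundary_diff intro: relcochain_diff)

abbreviation shift_simplex :: "nat \<Rightarrow> (nat \<Rightarrow> real) \<Rightarrow> nat \<Rightarrow> real" where
  "shift_simplex p y \<equiv> (\<lambda>i. if i < p then 0 else y (i - p))"

lemma sum_shift_simplex: "(\<Sum>i\<le>p + q. shift_simplex p y i) = (\<Sum>i\<le>q. y i)"
proof -
  have "{..p + q} = {..<p} \<union> {0 + p..q + p}"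
    by auto
  then have "(\<Sum>i\<le>p + q. shift_simplex p y i)
               = (\<Sum>i<p. shift_simplex p y i) + (\<Sum>i\<in>{0 + p..q + p}. shift_simplex p y i)"
    by (simp only:) (rule sum.union_disjoint, auto)
  also have "\<dots> = (\<Sum>i\<in>{0 + p..q + p}. shift_simplex p y i)"
    by simp
  also have "\<dots> = (\<Sum>i\<le>q. y i)"
    by (simp only: sum.shift_bounds_cl_nat_ivl) (simp add: atLeast0AtMost)
  finally show ?thesis .
qed

lemma shift_simplex_in_standard_simplex:
  "y \<in> standard_simplex q \<Longrightarrow> shift_simplex p y \<in> standard_simplex (p + q)"
  using sum_shift_simplex [where p = p and q = q and y = y] by (auto simp: standard_simplex_def)

lemma standard_simplex_le_add: "y \<in> standard_simplex p \<Longrightarrow> y \<in> standard_simplex (p + q)"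
  using standard_simplex_mono [of p "p + q"] by auto

lemma continuous_map_shift_simplex:
  "continuous_map (subtopology (powertop_real UNIV) (standard_simplex q))
     (subtopology (powertop_real UNIV) (standard_simplex (p + q))) (shift_simplex p)"
  unfolding continuous_map_in_subtopology
proof
  have "continuous_map (subtopology (powertop_real UNIV) (standard_simplex q)) euclideanreal
          (\<lambda>y. shift_simplex p y i)" for i
    by (cases "i < p") (auto intro: continuous_map_from_subtopology continuous_map_product_projection)
  then show "continuous_map (subtopology (powertop_real UNIV) (standard_simplex q)) (powertop_real UNIV)
               (shift_simplex p)"
    by (simp add: continuous_map_componentwise)
qed (auto simp: shift_simplex_in_standard_simplex)

lemma singular_simplex_front_face:
  assumes "singular_simplex (p+q) Y s"
  shows "singular_simplex p Y (front_face p s)"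
proof -
  have "continuous_map (subtopology (powertop_real UNIV) (standard_simplex p)) Y s"
    using assms unfolding singular_simplex_def
    by (meson continuous_map_from_subtopology_mono standard_simplex_le_add subsetI)
  then have "continuous_map (subtopology (powertop_real UNIV) (standard_simplex p)) Y (restrict s (standard_simplex p))"
    by (rule continuous_map_eq) simp
  then show ?thesis
    by (simp add: singular_simplex_def front_face_def)
qed

lemma singular_simplex_back_face:
  assumes "singular_simplex (p+q) Y s"
  shows "singular_simplex q Y (back_face p q s)"
proof -
  have "continuous_map (subtopology (powertop_real UNIV) (standard_simplex q)) Y (s \<circ> shift_simplex p)"
    using assms continuous_map_compose[OF continuous_map_shift_simplex[of q p]] unfolding singular_simplex_def
    by blast
  then have "continuous_map (subtopology (powertop_real UNIV) (standard_simplex q)) Y (restrict (s \<circ> shift_simplex p) (standard_simplex q))"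
    by (rule continuous_map_eq) simp
  then show ?thesis
    by (simp add: singular_simplex_def back_face_def)
qed

lemma simplical_face_in_Suc:
  "k \<le> Suc p \<Longrightarrow> y \<in> standard_simplex p \<Longrightarrow> simplical_face k y \<in> standard_simplex (Suc p)"
  using simplical_face_in_standard_simplex [of "Suc p" k y] by simp

lemma simplical_face_id: "y \<in> standard_simplex p \<Longrightarrow> p < k \<Longrightarrow> simplical_face k y = y"
  by (auto simp: simplical_face_def fun_eq_iff standard_simplex_def)

lemma simplical_face_shift_simplex_le:
  "k \<le> p \<Longrightarrow> simplical_face k (shift_simplex p y) = shift_simplex (Suc p) y"
  by (auto simp: simplical_face_def fun_eq_iff)

lemma simplical_face_shift_simplex_gt:
  "simplical_face (Suc (p + j)) (shift_simplex p y) = shift_simplex p (simplical_face (Suc j) y)"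
  by (auto simp: simplical_face_def fun_eq_iff)

lemma shift_simplex_simplical_face_0: "shift_simplex p (simplical_face 0 y) = shift_simplex (Suc p) y"
  by (auto simp: simplical_face_def fun_eq_iff)

lemma front_face_singular_face_le:
  assumes "k \<le> p"
  shows "front_face p (singular_face (Suc (p + q)) k s) = singular_face (Suc p) k (front_face (Suc p) s)"
  unfolding front_face_def singular_face_def diff_Suc_Suc diff_zero
  by (intro restrict_ext) (simp add: standard_simplex_le_add simplical_face_in_Suc [OF le_SucI [OF assms]])

lemma back_face_singular_face_le:
  assumes "k \<le> p"
  shows "back_face p q (singular_face (Suc (p + q)) k s) = back_face (Suc p) q s"
  unfolding back_face_def singular_face_def diff_Suc_Suc diff_zero
  by (intro restrict_ext) (simp add: assms shift_simplex_in_standard_simplex simplical_face_shift_simplex_le)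

lemma front_face_singular_face_gt:
  "front_face p (singular_face (Suc (p + q)) (Suc (p + j)) s) = front_face p s"
  unfolding front_face_def singular_face_def diff_Suc_Suc diff_zero
  by (intro restrict_ext) (simp add: standard_simplex_le_add simplical_face_id)

lemma back_face_singular_face_gt:
  assumes "j \<le> q"
  shows "back_face p q (singular_face (Suc (p + q)) (Suc (p + j)) s)
           = singular_face (Suc q) (Suc j) (back_face p (Suc q) s)"
  unfolding back_face_def singular_face_def diff_Suc_Suc diff_zero
  by (intro restrict_ext)
    (simp add: assms shift_simplex_in_standard_simplex simplical_face_in_Suc simplical_face_shift_simplex_gt)

lemma singular_face_front_face: "singular_face (Suc p) (Suc p) (front_face (Suc p) s) = front_face p s"
  unfolding front_face_def singular_face_def diff_Suc_Suc diff_zero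
  by (intro restrict_ext) (simp add: standard_simplex_le_add [where q = 1, simplified] simplical_face_id)

lemma singular_face_back_face: "singular_face (Suc q) 0 (back_face p (Suc q) s) = back_face (Suc p) q s"
  unfolding back_face_def singular_face_def diff_Suc_Suc diff_zero
  by (intro restrict_ext) (simp add: simplical_face_in_Suc shift_simplex_simplical_face_0)

lemma coboundary_cup:
  "coboundary (p+q) X (cup p q X c d) s =
     cup (Suc p) q X (coboundary p X c) d s + (-1)^p * cup p (Suc q) X c (coboundary q X d) s"
proof (cases "singular_simplex (Suc (p+q)) X s")
  case False
  then show ?thesis by (simp add: coboundary_def cup_def)
next
  case True
  define F where "F k = singular_face (Suc (p+q)) k s" for k
  define cf where "cf = c (front_face p s)"
  define dB where "dB = d (back_face (Suc p) q s)"
  define A where "A = (\<Sum>k\<le>p. (-1)^k * c (singular_face (Suc p) k (front_face (Suc p) s)))"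
  define G where "G j = d (singular_face (Suc q) (Suc j) (back_face p (Suc q) s))" for j
  have Fss: "singular_simplex (p+q) X (F k)" if "k \<le> Suc (p+q)" for k
    using singular_simplex_singular_face[OF True _ that] by (simp add: F_def)
  have split: "{..Suc (p+q)} = {..p} \<union> (\<lambda>j. Suc (p+j)) ` {..q}"
  proof (intro Set.set_eqI HOL.iffI)
    fix k assume "k \<in> {..Suc (p+q)}"
    then show "k \<in> {..p} \<union> (\<lambda>j. Suc (p+j)) ` {..q}"
    proof (cases "k \<le> p")
      case False
      then have "k = Suc (p + (k - Suc p))" by simp
      moreover have "k - Suc p \<le> q" using \<open>k \<in> {..Suc (p+q)}\<close> by simp
      ultimately show ?thesis by blast
    qed simp
  qed auto
  have "coboundary (p+q) X (cup p q X c d) s = (\<Sum>k\<le>Suc (p+q). (-1)^k * (c (front_face p (F k)) * d (back_face p q (F k))))"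
    using True Fss by (simp add: coboundary_def cup_def F_def del: sum.atMost_Suc)
  also have "\<dots> = (\<Sum>k\<le>p. (-1)^k * (c (front_face p (F k)) * d (back_face p q (F k))))
      + (\<Sum>k\<in>(\<lambda>j. Suc (p+j)) ` {..q}. (-1)^k * (c (front_face p (F k)) * d (back_face p q (F k))))"
    unfolding split by (rule sum.union_disjoint) auto
  also have "(\<Sum>k\<le>p. (-1)^k * (c (front_face p (F k)) * d (back_face p q (F k)))) = A * dB"
    by (simp add: A_def dB_def F_def front_face_singular_face_le back_face_singular_face_le sum_distrib_right mult.assoc)
  also have "(\<Sum>k\<in>(\<lambda>j. Suc (p+j)) ` {..q}. (-1)^k * (c (front_face p (F k)) * d (back_face p q (F k))))
      = (\<Sum>j\<le>q. (-1)^(Suc (p+j)) * (cf * G j))"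
    by (subst sum.reindex) (auto simp: inj_on_def F_def front_face_singular_face_gt back_face_singular_face_gt cf_def G_def)
  finally have L: "coboundary (p+q) X (cup p q X c d) s = A * dB + (\<Sum>j\<le>q. (-1)^(Suc (p+j)) * (cf * G j))" .
  have fss: "singular_simplex (Suc p) X (front_face (Suc p) s)"
    using singular_simplex_front_face[of "Suc p" q X s] True by simp
  have bss: "singular_simplex (Suc q) X (back_face p (Suc q) s)"
    using singular_simplex_back_face[of p "Suc q" X s] True by simp
  have R1: "cup (Suc p) q X (coboundary p X c) d s = (A + (-1)^(Suc p) * cf) * dB"
    using True fss by (simp add: cup_def coboundary_def A_def cf_def dB_def singular_face_front_face del: sum.atMost_Suc) (simp add: singular_face_front_face)
  have "coboundary q X d (back_face p (Suc q) s) = dB + (\<Sum>j\<le>q. (-1)^(Suc j) * G j)"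
    using bss unfolding coboundary_def
    by (simp add: sum.atMost_Suc_shift singular_face_back_face dB_def G_def del: sum.atMost_Suc)
  then have R2: "cup p (Suc q) X c (coboundary q X d) s = cf * (dB + (\<Sum>j\<le>q. (-1)^(Suc j) * G j))"
    using True by (simp add: cup_def cf_def)
  have "(\<Sum>j\<le>q. (-1)^(Suc (p+j)) * (cf * G j)) = (-1)^p * (cf * (\<Sum>j\<le>q. (-1)^(Suc j) * G j))"
    by (simp add: sum_distrib_left power_add mult_ac)
  then show ?thesis
    unfolding L R1 R2 by (simp add: algebra_simps)
qed

lemma cup_relcochain_left:
  assumes "relcochain p X A c"
  shows "relcochain (p+q) X A (cup p q X c d)"
  using assms singular_simplex_front_face[of p q "subtopology X A"]
  by (auto simp: relcochain_def cochain_def cup_def)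

lemma cup_relcochain_right:
  assumes "relcochain q X A d"
  shows "relcochain (p+q) X A (cup p q X c d)"
  using assms singular_simplex_back_face[of p q "subtopology X A"]
  by (auto simp: relcochain_def cochain_def cup_def)

lemma cup_relcocycle:
  assumes "relcocycle p X A c" "relcocycle q X A d"
  shows "relcocycle (p+q) X A (cup p q X c d)"
  using assms cup_relcochain_left[of p X A c q d]
  by (auto simp: relcocycle_def coboundary_cup fun_eq_iff cup_def)

lemma cup_diff_left: "cup p q X (\<lambda>s. c s - c' s) d = (\<lambda>s. cup p q X c d s - cup p q X c' d s)"
  by (auto simp: cup_def fun_eq_iff algebra_simps)

lemma cup_diff_right: "cup p q X c (\<lambda>s. d s - d' s) = (\<lambda>s. cup p q X c d s - cup p q X c d' s)"
  by (auto simp: cup_def fun_eq_iff algebra_simps)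

lemma cup_zero_left: "cup p q X (\<lambda>s. 0) d = (\<lambda>s. 0)"
  by (auto simp: cup_def fun_eq_iff)

lemma cup_zero_right: "cup p q X c (\<lambda>s. 0) = (\<lambda>s. 0)"
  by (auto simp: cup_def fun_eq_iff)

lemma cup_coboundary_left:
  assumes "relcoboundary p X A e" "relcocycle q X A d"
  shows "relcoboundary (p+q) X A (cup p q X e d)"
proof (cases p)
  case 0
  then have "e = (\<lambda>s. 0)" using assms by (simp add: relcoboundary_def)
  then show ?thesis by (simp add: cup_zero_left relcoboundary_zero)
next
  case (Suc p')
  then obtain b where b: "relcochain p' X A b" "e = coboundary p' X b"
    using assms by (auto simp: relcoboundary_def)
  have "cup p q X e d = coboundary (p'+q) X (cup p' q X b d)"
    using assms(2) by (auto simp: fun_eq_iff coboundary_cup b Suc relcocycle_def cup_def)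
  moreover have "relcochain (p'+q) X A (cup p' q X b d)"
    by (rule cup_relcochain_left[OF b(1)])
  ultimately show ?thesis
    unfolding relcoboundary_def using Suc by auto
qed

lemma cup_coboundary_right:
  assumes "relcocycle p X A c" "relcoboundary q X A e"
  shows "relcoboundary (p+q) X A (cup p q X c e)"
proof (cases q)
  case 0
  then have "e = (\<lambda>s. 0)" using assms by (simp add: relcoboundary_def)
  then show ?thesis by (simp add: cup_zero_right relcoboundary_zero)
next
  case (Suc q')
  then obtain b where b: "relcochain q' X A b" "e = coboundary q' X b"
    using assms by (auto simp: relcoboundary_def)
  have "coboundary (p+q') X (cup p q' X c b) = (\<lambda>s. (-1)^p * cup p (Suc q') X c (coboundary q' X b) s)"
    using assms(1) by (auto simp: fun_eq_iff coboundary_cup relcocycle_def cup_def)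
  then have "cup p q X c e = (\<lambda>s. (-1)^p * coboundary (p+q') X (cup p q' X c b) s)"
    by (simp add: b Suc fun_eq_iff)
  also have "\<dots> = coboundary (p+q') X (\<lambda>s. (-1)^p * cup p q' X c b s)"
    by (simp add: coboundary_scale)
  finally have "cup p q X c e = coboundary (p+q') X (\<lambda>s. (-1)^p * cup p q' X c b s)" .
  moreover have "relcochain (p+q') X A (\<lambda>s. (-1)^p * cup p q' X c b s)"
    by (rule relcochain_scale, rule cup_relcochain_right[OF b(1)])
  ultimately show ?thesis
    unfolding relcoboundary_def using Suc by auto
qed


lemma fst_cup_list: "fst (cup_list X pcs) = sum_list (map fst pcs)"
  by (induction X pcs rule: cup_list.induct) (simp_all add: Let_def)

lemma cup_list_Cons:
  "rest \<noteq> [] \<Longrightarrow> cup_list X (pc # rest)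
     = (fst pc + fst (cup_list X rest), cup (fst pc) (fst (cup_list X rest)) X (snd pc) (snd (cup_list X rest)))"
  by (cases rest) (auto simp: Let_def)

lemma relcocycle_cup_list:
  assumes "pcs \<noteq> []" "\<And>p c. (p, c) \<in> set pcs \<Longrightarrow> relcocycle p X A c"
  shows "relcocycle (fst (cup_list X pcs)) X A (snd (cup_list X pcs))"
  using assms
proof (induction pcs)
  case (Cons pc rest)
  then show ?case
    by (cases "rest = []") (auto simp: cup_list_Cons cup_relcocycle split: prod.splits)
qed simp

lemma relcoboundary_cup_list_diff:
  fixes deg :: "'i \<Rightarrow> nat" and c d :: "'i \<Rightarrow> ((nat \<Rightarrow> real) \<Rightarrow> 'a) \<Rightarrow> 'r::comm_ring_1"
  assumes "\<And>i. i \<in> set ixs \<Longrightarrow> relcocycle (deg i) X A (c i) \<and> relcocycle (deg i) X A (d i)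
                                \<and> relcoboundary (deg i) X A (\<lambda>s. c i s - d i s)"
  shows "relcoboundary (sum_list (map deg ixs)) X A
           (\<lambda>s. snd (cup_list X (map (\<lambda>i. (deg i, c i)) ixs)) s - snd (cup_list X (map (\<lambda>i. (deg i, d i)) ixs)) s)"
  using assms
proof (induction ixs)
  case Nil
  then show ?case
    by (simp add: relcoboundary_zero)
next
  case (Cons i rest)
  show ?case
  proof (cases "rest = []")
    case True
    then show ?thesis
      using Cons.prems by simp
  next
    case False
    define y where "y = snd (cup_list X (map (\<lambda>i. (deg i, c i)) rest))"
    define y' where "y' = snd (cup_list X (map (\<lambda>i. (deg i, d i)) rest))"
    define n where "n = sum_list (map deg rest)"
    have i: "relcocycle (deg i) X A (d i)" "relcoboundary (deg i) X A (\<lambda>s. c i s - d i s)"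
      using Cons.prems by auto
    have "relcocycle n X A y"
      using relcocycle_cup_list [of "map (\<lambda>i. (deg i, c i)) rest" X A] False Cons.prems
      by (auto simp: y_def n_def fst_cup_list o_def)
    then have "relcoboundary (deg i + n) X A (\<lambda>s. cup (deg i) n X (c i) y s - cup (deg i) n X (d i) y s)"
      using cup_coboundary_left [OF i(2)] by (simp add: cup_diff_left)
    moreover have "relcoboundary (deg i + n) X A (\<lambda>s. cup (deg i) n X (d i) y s - cup (deg i) n X (d i) y' s)"
    proof -
      have "relcoboundary n X A (\<lambda>s. y s - y' s)"
        using Cons by (simp add: y_def y'_def n_def)
      from cup_coboundary_right [OF i(1) this] show ?thesis
        by (simp add: cup_diff_right)
    qed
    ultimately have "relcoboundary (deg i + n) X A (\<lambda>s. cup (deg i) n X (c i) y s - cup (deg i) n X (d i) y' s)"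
      using relcoboundary_add by fastforce
    then show ?thesis
      using False by (simp add: cup_list_Cons fst_cup_list o_def y_def y'_def n_def)
  qed
qed

lemma cup_list_vanishes:
  fixes deg :: "'i \<Rightarrow> nat" and c :: "'i \<Rightarrow> ((nat \<Rightarrow> real) \<Rightarrow> 'a) \<Rightarrow> 'r::comm_ring_1"
  assumes "j \<in> set ixs" "\<And>\<tau>. singular_simplex (deg j) (subtopology X V) \<tau> \<Longrightarrow> c j \<tau> = 0"
    and "singular_simplex (sum_list (map deg ixs)) (subtopology X V) \<sigma>"
  shows "snd (cup_list X (map (\<lambda>i. (deg i, c i)) ixs)) \<sigma> = 0"
  using assms(1,3)
proof (induction ixs arbitrary: \<sigma>)
  case (Cons i rest)
  show ?case
  proof (cases "rest = []")
    case True
    then show ?thesis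
      using Cons.prems assms(2) by simp
  next
    case False
    define n where "n = sum_list (map deg rest)"
    have \<sigma>: "singular_simplex (deg i + n) (subtopology X V) \<sigma>"
      using Cons.prems by (simp add: n_def)
    have "c i (front_face (deg i) \<sigma>) = 0 \<or> snd (cup_list X (map (\<lambda>i. (deg i, c i)) rest)) (back_face (deg i) n \<sigma>) = 0"
    proof (cases "j = i")
      case True
      then show ?thesis
        using assms(2) singular_simplex_front_face [OF \<sigma>] by simp
    next
      case False
      then show ?thesis
        using Cons singular_simplex_back_face [OF \<sigma>] by (simp add: n_def)
    qed
    then show ?thesis
      using \<open>rest \<noteq> []\<close> by (auto simp: cup_list_Cons fst_cup_list o_def cup_def n_def)
  qed
qed simp

lemma simplex_map_restrict: "simplex_map p f (restrict g (standard_simplex p)) = simplex_map p f g"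
  by (auto simp: simplex_map_def fun_eq_iff)

lemma pullback_relcocycle:
  assumes f: "continuous_map B X f" "f ` C \<subseteq> A" and c: "relcocycle p X A c"
  shows "relcocycle p B C (pullback p B f c)"
  unfolding relcocycle_def relcochain_def cochain_def
proof (intro conjI allI impI)
  fix s assume "\<not> singular_simplex p B s"
  then show "pullback p B f c s = 0" by (simp add: pullback_def)
next
  fix s assume s: "singular_simplex p (subtopology B C) s"
  have "continuous_map (subtopology B C) (subtopology X A) f"
    using f by (auto simp: continuous_map_in_subtopology continuous_map_from_subtopology)
  then have "singular_simplex p (subtopology X A) (simplex_map p f s)"
    using s singular_simplex_simplex_map by blast
  then show "pullback p B f c s = 0"
    using c s by (auto simp: pullback_def relcocycle_def relcochain_def singular_simplex_subtopology)
next
  show "coboundary p B (pullback p B f c) = (\<lambda>s. 0)"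
  proof
    fix s
    show "coboundary p B (pullback p B f c) s = 0"
    proof (cases "singular_simplex (Suc p) B s")
      case True
      have fs: "singular_simplex (Suc p) X (simplex_map (Suc p) f s)"
        using True f singular_simplex_simplex_map by blast
      have "coboundary p B (pullback p B f c) s = (\<Sum>k\<le>Suc p. (-1)^k * pullback p B f c (singular_face (Suc p) k s))"
        using True by (simp add: coboundary_def del: sum.atMost_Suc)
      also have "\<dots> = (\<Sum>k\<le>Suc p. (-1)^k * c (singular_face (Suc p) k (simplex_map (Suc p) f s)))"
      proof (rule sum.cong[OF refl])
        fix k assume k: "k \<in> {..Suc p}"
        have "singular_simplex p B (singular_face (Suc p) k s)"
          using singular_simplex_singular_face[OF True _ ] k by simp
        moreover have "simplex_map p f (singular_face (Suc p) k s) = singular_face (Suc p) k (simplex_map (Suc p) f s)"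
          using k by (subst singular_face_simplex_map) (auto simp: singular_face_def simplex_map_restrict)
        ultimately show "(-1)^k * pullback p B f c (singular_face (Suc p) k s) = (-1)^k * c (singular_face (Suc p) k (simplex_map (Suc p) f s))"
          by (simp add: pullback_def)
      qed
      also have "\<dots> = coboundary p X c (simplex_map (Suc p) f s)"
        using fs by (simp add: coboundary_def del: sum.atMost_Suc)
      also have "\<dots> = 0" using c by (simp add: relcocycle_def)
      finally show ?thesis .
    qed (simp add: coboundary_def)
  qed
qed


definition cylinder_point :: "real \<Rightarrow> (nat \<Rightarrow> real) \<Rightarrow> nat \<Rightarrow> real" where
  "cylinder_point t x = (\<lambda>i. if i = 0 then t else x (i - 1))"

definition cylinder :: "nat \<Rightarrow> (nat \<Rightarrow> real) set" where
  "cylinder q = {z. z 0 \<in> {0..1} \<and> z \<circ> Suc \<in> standard_simplex q}"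

lemma cylinder_point_0 [simp]: "cylinder_point t x 0 = t"
  and cylinder_point_Suc [simp]: "cylinder_point t x \<circ> Suc = x"
  by (auto simp: cylinder_point_def fun_eq_iff)

lemma cylinder_point_in_cylinder [simp]:
  "cylinder_point t x \<in> cylinder q \<longleftrightarrow> t \<in> {0..1} \<and> x \<in> standard_simplex q"
  by (simp add: cylinder_def)

lemma convex_cylinder:
  assumes "x \<in> cylinder q" "y \<in> cylinder q" "0 \<le> u" "u \<le> 1"
  shows "(\<lambda>i. (1 - u) * x i + u * y i) \<in> cylinder q"
proof -
  have "(1 - u) * x 0 + u * y 0 \<in> {0..1}"
    using assms by (simp add: cylinder_def convex_bound_le)
  moreover have "x \<circ> Suc \<in> standard_simplex q" "y \<circ> Suc \<in> standard_simplex q"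
    using assms by (auto simp: cylinder_def)
  note convex_standard_simplex [OF this assms(3,4)]
  ultimately show ?thesis
    by (simp add: cylinder_def o_def)
qed

lemma continuous_map_cylinder_time:
  "continuous_map (subtopology (powertop_real UNIV) (cylinder q)) (top_of_set {0..1}) (\<lambda>z. z 0)"
  by (auto simp: continuous_map_in_subtopology cylinder_def
      intro!: continuous_map_from_subtopology continuous_map_product_projection)

lemma continuous_map_cylinder_base:
  "continuous_map (subtopology (powertop_real UNIV) (cylinder q))
     (subtopology (powertop_real UNIV) (standard_simplex q)) (\<lambda>z. z \<circ> Suc)"
  by (auto simp: continuous_map_in_subtopology continuous_map_componentwise cylinder_def
      intro!: continuous_map_from_subtopology continuous_map_product_projection)

lemma continuous_map_cylinder_point:
  "continuous_map (prod_topology (top_of_set {0..1}) (subtopology (powertop_real UNIV) (standard_simplex q)))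
     (powertop_real UNIV) (\<lambda>(t, x). cylinder_point t x)"
  unfolding continuous_map_componentwise
proof (intro conjI ballI)
  fix i :: nat
  show "continuous_map (prod_topology (top_of_set {0..1}) (subtopology (powertop_real UNIV) (standard_simplex q)))
          euclideanreal (\<lambda>x. (case x of (t, x) \<Rightarrow> cylinder_point t x) i)"
  proof (cases "i = 0")
    case True
    then show ?thesis
      by (simp add: cylinder_point_def case_prod_unfold)
        (metis continuous_map_fst continuous_map_into_fulltopology)
  next
    case False
    have "continuous_map (subtopology (powertop_real UNIV) (standard_simplex q)) euclideanreal (\<lambda>x. x (i - 1))"
      by (auto intro: continuous_map_from_subtopology continuous_map_product_projection)
    with False show ?thesis
      using continuous_map_compose [OF continuous_map_snd]
      by (fastforce simp: cylinder_point_def case_prod_unfold o_def)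
  qed
qed auto


definition cylinder_end :: "real \<Rightarrow> nat \<Rightarrow> (nat \<Rightarrow> real) \<Rightarrow> nat \<Rightarrow> real" where
  "cylinder_end t q = restrict (cylinder_point t) (standard_simplex q)"

definition cylinder_apex :: "nat \<Rightarrow> real" where
  "cylinder_apex = cylinder_point 0 (\<lambda>i. if i = 0 then 1 else 0)"

primrec prism_model :: "nat \<Rightarrow> (nat \<Rightarrow> real) chain" where
  "prism_model 0 =
     simplicial_cone 0 cylinder_apex (frag_of (cylinder_end 1 0) - frag_of (cylinder_end 0 0))"
| "prism_model (Suc q) =
     simplicial_cone (Suc q) cylinder_apex
       (frag_of (cylinder_end 1 (Suc q)) - frag_of (cylinder_end 0 (Suc q))
        - frag_extend (\<lambda>\<sigma>. chain_map (Suc q) (\<lambda>z. cylinder_point (z 0) (\<sigma> (z \<circ> Suc))) (prism_model q))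
            (chain_boundary (Suc q) (frag_of (restrict id (standard_simplex (Suc q))))))"

definition prism :: "(real \<times> 'a \<Rightarrow> 'b) \<Rightarrow> nat \<Rightarrow> 'a chain \<Rightarrow> 'b chain" where
  "prism h q = frag_extend (\<lambda>\<sigma>. chain_map (Suc q) (\<lambda>z. h (z 0, \<sigma> (z \<circ> Suc))) (prism_model q))"

definition cylinder_boundary :: "nat \<Rightarrow> (nat \<Rightarrow> real) chain" where
  "cylinder_boundary q =
     frag_of (cylinder_end 1 q) - frag_of (cylinder_end 0 q)
     - prism (\<lambda>(t, x). cylinder_point t x) (q - 1) (chain_boundary q (frag_of (restrict id (standard_simplex q))))"

lemma prism_model_eq: "prism_model q = simplicial_cone q cylinder_apex (cylinder_boundary q)"
  by (cases q) (simp_all add: cylinder_boundary_def prism_def chain_boundary_of)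

lemma prism_diff: "prism h q (a - b) = prism h q a - prism h q b"
  by (simp add: prism_def frag_extend_diff)

lemma prism_of: "prism h q (frag_of \<sigma>) = chain_map (Suc q) (\<lambda>z. h (z 0, \<sigma> (z \<circ> Suc))) (prism_model q)"
  by (simp add: prism_def)

lemma oriented_simplex_vertex:
  assumes "simplicial_simplex p S (oriented_simplex p l)" "j \<le> p"
  shows "l j \<in> S"
proof -
  let ?e = "\<lambda>i. if i = j then 1 else (0::real)"
  have "?e \<in> standard_simplex p"
    using assms(2) by (simp add: standard_simplex_def)
  then have "oriented_simplex p l ?e \<in> S"
    using assms(1) by (auto simp: simplicial_simplex)
  moreover have "oriented_simplex p l ?e = l j"
  proof
    fix i
    have "(\<Sum>k\<le>p. l k i * ?e k) = (\<Sum>k\<le>p. if k = j then l j i else 0)"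
      by (rule sum.cong) auto
    then show "oriented_simplex p l ?e i = l j i"
      using assms(2) \<open>?e \<in> standard_simplex p\<close> by (simp add: oriented_simplex_def)
  qed
  ultimately show ?thesis
    by simp
qed

lemma cylinder_end_oriented:
  "cylinder_end t q = oriented_simplex q (\<lambda>j. cylinder_point t (\<lambda>i. if i = j then 1 else 0))"
proof -
  have "(\<lambda>i. \<Sum>j\<le>q. cylinder_point t (\<lambda>i. if i = j then 1 else 0) i * x j) = cylinder_point t x"
    if x: "x \<in> standard_simplex q" for x
  proof
    fix i
    show "(\<Sum>j\<le>q. cylinder_point t (\<lambda>i. if i = j then 1 else 0) i * x j) = cylinder_point t x i"
    proof (cases i)
      case 0
      have "(\<Sum>j\<le>q. t * x j) = t"
        using x by (simp add: standard_simplex_def flip: sum_distrib_left)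
      then show ?thesis
        by (simp add: cylinder_point_def 0)
    next
      case (Suc i')
      have "(\<Sum>j\<le>q. (if i' = j then 1 else 0) * x j) = (\<Sum>j\<le>q. if j = i' then x i' else 0)"
        by (rule sum.cong) auto
      also have "\<dots> = x i'"
        using x by (simp add: standard_simplex_def)
      finally show ?thesis
        by (simp add: cylinder_point_def Suc)
    qed
  qed
  then show ?thesis
    unfolding cylinder_end_def oriented_simplex_def by (intro restrict_ext) simp
qed

lemma simplicial_simplex_cylinder_end:
  assumes "t \<in> {0..1}"
  shows "simplicial_simplex q (cylinder q) (cylinder_end t q)"
  unfolding simplicial_simplex
proof
  show "cylinder_end t q ` standard_simplex q \<subseteq> cylinder q"
    using assms by (auto simp: cylinder_end_def)
  show "\<exists>l. cylinder_end t q = oriented_simplex q l"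
    using cylinder_end_oriented by blast
qed


lemma simplicial_simplex_cylinder_map:
  assumes \<sigma>: "simplicial_simplex p (standard_simplex r) \<sigma>" and g: "simplicial_simplex k (cylinder p) g"
  shows "simplicial_simplex k (cylinder r) (simplex_map k (\<lambda>z. cylinder_point (z 0) (\<sigma> (z \<circ> Suc))) g)"
proof -
  define \<Phi> where "\<Phi> = (\<lambda>z. cylinder_point (z 0) (\<sigma> (z \<circ> Suc)))"
  obtain m where m: "\<sigma> = oriented_simplex p m"
    using \<sigma> by (auto simp: simplicial_simplex)
  obtain l where l: "g = oriented_simplex k l"
    using g by (auto simp: simplicial_simplex)
  have l_in: "l j \<in> cylinder p" if "j \<le> k" for j
    using oriented_simplex_vertex [of k "cylinder p" l j] g l that by simp
  have \<sigma>_vertex: "\<sigma> (l j \<circ> Suc) i = (\<Sum>n\<le>p. m n i * l j (Suc n))" if "j \<le> k" for j i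
  proof -
    have "l j \<circ> Suc \<in> standard_simplex p"
      using l_in [OF that] by (simp add: cylinder_def)
    then show ?thesis
      by (simp add: m oriented_simplex_def)
  qed
  have \<Phi>_lin: "\<Phi> (\<lambda>i. \<Sum>j\<le>k. l j i * x j) = (\<lambda>i. \<Sum>j\<le>k. \<Phi> (l j) i * x j)"
    if x: "x \<in> standard_simplex k" for x
  proof
    fix i
    let ?y = "\<lambda>i. \<Sum>j\<le>k. l j i * x j"
    show "\<Phi> ?y i = (\<Sum>j\<le>k. \<Phi> (l j) i * x j)"
    proof (cases i)
      case 0
      then show ?thesis
        by (simp add: \<Phi>_def cylinder_point_def)
    next
      case (Suc i')
      have "g x \<in> cylinder p"
        using g x by (auto simp: simplicial_simplex)
      moreover have "g x = ?y"
        using x by (simp add: l oriented_simplex_def)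
      ultimately have "?y \<in> cylinder p"
        by metis
      then have "?y \<circ> Suc \<in> standard_simplex p"
        unfolding cylinder_def by blast
      then have "\<sigma> (?y \<circ> Suc) i' = (\<Sum>n\<le>p. \<Sum>j\<le>k. m n i' * (l j (Suc n) * x j))"
        by (simp add: m oriented_simplex_def sum_distrib_left)
      also have "\<dots> = (\<Sum>j\<le>k. \<Sum>n\<le>p. m n i' * (l j (Suc n) * x j))"
        by (rule sum.swap)
      also have "\<dots> = (\<Sum>j\<le>k. \<sigma> (l j \<circ> Suc) i' * x j)"
        by (rule sum.cong) (simp_all add: \<sigma>_vertex sum_distrib_right mult.assoc)
      finally show ?thesis
        by (simp add: \<Phi>_def cylinder_point_def Suc)
    qed
  qed
  have "simplex_map k \<Phi> g = oriented_simplex k (\<Phi> \<circ> l)"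
    using \<Phi>_lin by (auto simp: simplex_map_def l oriented_simplex_def fun_eq_iff)
  moreover have "simplex_map k \<Phi> g ` standard_simplex k \<subseteq> cylinder r"
  proof -
    have "\<sigma> ` standard_simplex p \<subseteq> standard_simplex r"
      using \<sigma> by (simp add: simplicial_simplex)
    then have "\<Phi> z \<in> cylinder r" if "z \<in> cylinder p" for z
      using that unfolding cylinder_def by (auto simp: \<Phi>_def)
    moreover have "g ` standard_simplex k \<subseteq> cylinder p"
      using g by (simp add: simplicial_simplex)
    ultimately show ?thesis
      by (auto simp: simplex_map_def)
  qed
  ultimately have "simplicial_simplex k (cylinder r) (simplex_map k \<Phi> g)"
    unfolding simplicial_simplex by metis
  then show ?thesis
    by (simp only: \<Phi>_def)
qed

lemma simplicial_chain_cylinder_map: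
  assumes \<sigma>: "simplicial_simplex p (standard_simplex r) \<sigma>" and c: "simplicial_chain k (cylinder p) c"
  shows "simplicial_chain k (cylinder r) (chain_map k (\<lambda>z. cylinder_point (z 0) (\<sigma> (z \<circ> Suc))) c)"
proof -
  have "Poly_Mapping.keys c \<subseteq> Collect (simplicial_simplex k (cylinder p))"
    using c by (simp add: simplicial_chain_def)
  then show ?thesis
  proof (induction c rule: frag_induction)
    case (one g)
    then have "simplicial_simplex k (cylinder p) g"
      by simp
    then show ?case
      unfolding chain_map_of simplicial_chain_of by (rule simplicial_simplex_cylinder_map [OF \<sigma>])
  next
    case (diff a b)
    then show ?case
      by (simp add: chain_map_diff simplicial_chain_diff)
  qed simp
qed

lemma simplicial_chain_prism_cylinder:
  assumes model: "simplicial_chain (Suc p) (cylinder p) (prism_model p)"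
    and c: "simplicial_chain p (standard_simplex r) c"
  shows "simplicial_chain (Suc p) (cylinder r) (prism (\<lambda>(t, x). cylinder_point t x) p c)"
proof -
  have "Poly_Mapping.keys c \<subseteq> Collect (simplicial_simplex p (standard_simplex r))"
    using c by (simp add: simplicial_chain_def)
  then show ?thesis
  proof (induction c rule: frag_induction)
    case (one \<sigma>)
    then have "simplicial_simplex p (standard_simplex r) \<sigma>"
      by simp
    then show ?case
      unfolding prism_of case_prod_conv by (rule simplicial_chain_cylinder_map [OF _ model])
  next
    case (diff a b)
    then show ?case
      by (simp add: prism_diff simplicial_chain_diff)
  qed (simp add: prism_def)
qed

lemma simplicial_chain_prism_model_if:
  assumes "simplicial_chain q (cylinder q) (cylinder_boundary q)"
  shows "simplicial_chain (Suc q) (cylinder q) (prism_model q)"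
  unfolding prism_model_eq
proof (rule simplicial_chain_simplicial_cone [OF assms])
  have "cylinder_apex \<in> cylinder q"
    by (simp add: cylinder_apex_def standard_simplex_def)
  then show "(\<lambda>i. (1 - u) * cylinder_apex i + u * x i) \<in> cylinder q"
    if "0 \<le> u" "u \<le> 1" "x \<in> cylinder q" for x u
    using that by (simp add: convex_cylinder)
qed

lemma simplicial_chain_cylinder_boundary: "simplicial_chain q (cylinder q) (cylinder_boundary q)"
proof (induction q)
  case 0
  then show ?case
    by (simp add: cylinder_boundary_def chain_boundary_of prism_def simplicial_chain_diff
        simplicial_simplex_cylinder_end)
next
  case (Suc q)
  have "simplicial_chain q (standard_simplex (Suc q))
          (chain_boundary (Suc q) (frag_of (restrict id (standard_simplex (Suc q)))))"
    using simplicial_chain_boundary [of "Suc q" "standard_simplex (Suc q)"] by simp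
  then have "simplicial_chain (Suc q) (cylinder (Suc q))
          (prism (\<lambda>(t, x). cylinder_point t x) q (chain_boundary (Suc q) (frag_of (restrict id (standard_simplex (Suc q))))))"
    by (intro simplicial_chain_prism_cylinder simplicial_chain_prism_model_if Suc.IH)
  then show ?case
    by (simp add: cylinder_boundary_def simplicial_chain_diff simplicial_simplex_cylinder_end)
qed

lemma simplicial_chain_prism_model: "simplicial_chain (Suc q) (cylinder q) (prism_model q)"
  by (intro simplicial_chain_prism_model_if simplicial_chain_cylinder_boundary)


lemma singular_chain_prism_model:
  "singular_chain (Suc q) (subtopology (powertop_real UNIV) (cylinder q)) (prism_model q)"
  by (rule simplicial_imp_singular_chain [OF simplicial_chain_prism_model])

lemma singular_chain_prism:
  assumes h: "continuous_map (prod_topology (top_of_set {0..1}) S) U h" and c: "singular_chain q S c"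
  shows "singular_chain (Suc q) U (prism h q c)"
  unfolding prism_def
proof (rule singular_chain_extend)
  fix \<sigma> assume "\<sigma> \<in> Poly_Mapping.keys c"
  then have "continuous_map (subtopology (powertop_real UNIV) (standard_simplex q)) S \<sigma>"
    using c by (auto simp: singular_chain_def singular_simplex_def)
  then have "continuous_map (subtopology (powertop_real UNIV) (cylinder q)) S (\<lambda>z. \<sigma> (z \<circ> Suc))"
    using continuous_map_compose [OF continuous_map_cylinder_base] by (simp add: o_def)
  then have "continuous_map (subtopology (powertop_real UNIV) (cylinder q)) (prod_topology (top_of_set {0..1}) S)
               (\<lambda>z. (z 0, \<sigma> (z \<circ> Suc)))"
    by (intro continuous_map_pairedI continuous_map_cylinder_time)
  then have "continuous_map (subtopology (powertop_real UNIV) (cylinder q)) U (\<lambda>z. h (z 0, \<sigma> (z \<circ> Suc)))"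
    using continuous_map_compose [OF _ h] by (simp add: o_def)
  then show "singular_chain (Suc q) U (chain_map (Suc q) (\<lambda>z. h (z 0, \<sigma> (z \<circ> Suc))) (prism_model q))"
    by (rule singular_chain_chain_map [OF singular_chain_prism_model])
qed

lemma chain_map_prism:
  assumes "singular_chain p (subtopology (powertop_real UNIV) (standard_simplex q)) c"
  shows "chain_map (Suc p) (\<lambda>z. h (z 0, \<sigma> (z \<circ> Suc))) (prism (\<lambda>(t, x). cylinder_point t x) p c)
           = prism h p (chain_map p \<sigma> c)"
proof -
  have "Poly_Mapping.keys c \<subseteq> Collect (singular_simplex p (subtopology (powertop_real UNIV) (standard_simplex q)))"
    using assms by (simp add: singular_chain_def)
  then show ?thesis
  proof (induction c rule: frag_induction)
    case (one \<tau>)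
    then have "\<tau> ` standard_simplex p \<subseteq> standard_simplex q"
      by (simp add: singular_simplex_subtopology)
    have "chain_map (Suc p) (\<lambda>z. h (z 0, \<sigma> (z \<circ> Suc)))
            (chain_map (Suc p) (\<lambda>z. cylinder_point (z 0) (\<tau> (z \<circ> Suc))) (prism_model p))
          = chain_map (Suc p) ((\<lambda>z. h (z 0, \<sigma> (z \<circ> Suc))) \<circ> (\<lambda>z. cylinder_point (z 0) (\<tau> (z \<circ> Suc))))
              (prism_model p)"
      by (simp add: chain_map_compose)
    also have "\<dots> = chain_map (Suc p) (\<lambda>z. h (z 0, simplex_map p \<sigma> \<tau> (z \<circ> Suc))) (prism_model p)"
      by (rule chain_map_eq [OF singular_chain_prism_model]) (simp add: simplex_map_def cylinder_def)
    finally show ?case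
      unfolding prism_of chain_map_of case_prod_conv .
  next
    case (diff a b)
    then show ?case
      by (simp add: chain_map_diff prism_diff)
  qed (simp add: prism_def)
qed

lemma chain_boundary_prism_if_model:
  assumes model: "chain_boundary (Suc q) (prism_model q) = cylinder_boundary q"
    and h: "continuous_map (prod_topology (top_of_set {0..1}) S) U h" and c: "singular_chain q S c"
  shows "chain_boundary (Suc q) (prism h q c)
           = chain_map q (\<lambda>x. h (1, x)) c - chain_map q (\<lambda>x. h (0, x)) c - prism h (q - 1) (chain_boundary q c)"
proof -
  have "Poly_Mapping.keys c \<subseteq> Collect (singular_simplex q S)"
    using c by (simp add: singular_chain_def)
  then show ?thesis
  proof (induction c rule: frag_induction)
    case (one \<sigma>)
    then have \<sigma>: "singular_simplex q S \<sigma>"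
      by simp
    define h\<sigma> where "h\<sigma> = (\<lambda>z. h (z 0, \<sigma> (z \<circ> Suc)))"
    have ends: "simplex_map q h\<sigma> (cylinder_end t q) = simplex_map q (\<lambda>x. h (t, x)) \<sigma>" for t
      by (auto simp: simplex_map_def cylinder_end_def h\<sigma>_def)
    have sides: "chain_map q h\<sigma> (prism (\<lambda>(t, x). cylinder_point t x) (q - 1)
                   (chain_boundary q (frag_of (restrict id (standard_simplex q)))))
                 = prism h (q - 1) (chain_boundary q (frag_of \<sigma>))"
    proof (cases q)
      case 0
      then show ?thesis
        by (simp add: chain_boundary_of prism_def)
    next
      case (Suc p)
      have \<iota>: "singular_chain (Suc p) (subtopology (powertop_real UNIV) (standard_simplex (Suc p)))
                 (frag_of (restrict id (standard_simplex (Suc p))))"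
        by (simp add: singular_chain_of simplicial_imp_singular_simplex)
      have "chain_map p \<sigma> (chain_boundary (Suc p) (frag_of (restrict id (standard_simplex (Suc p)))))
              = chain_boundary (Suc p) (frag_of \<sigma>)"
        using chain_boundary_chain_map [OF \<iota>, of \<sigma>] singular_simplex_chain_map_id [OF \<sigma>] Suc by simp
      moreover have "chain_map (Suc p) h\<sigma> (prism (\<lambda>(t, x). cylinder_point t x) p
                       (chain_boundary (Suc p) (frag_of (restrict id (standard_simplex (Suc p))))))
                     = prism h p (chain_map p \<sigma> (chain_boundary (Suc p) (frag_of (restrict id (standard_simplex (Suc p))))))"
        unfolding h\<sigma>_def by (rule chain_map_prism [OF singular_chain_boundary_alt [OF \<iota>]])
      ultimately show ?thesis
        using \<open>q = Suc p\<close> by simp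
    qed
    have "chain_boundary (Suc q) (prism h q (frag_of \<sigma>)) = chain_map q h\<sigma> (chain_boundary (Suc q) (prism_model q))"
      using chain_boundary_chain_map [OF singular_chain_prism_model] by (simp add: prism_of h\<sigma>_def)
    also have "\<dots> = chain_map q (\<lambda>x. h (1, x)) (frag_of \<sigma>) - chain_map q (\<lambda>x. h (0, x)) (frag_of \<sigma>)
                     - prism h (q - 1) (chain_boundary q (frag_of \<sigma>))"
      by (simp only: model cylinder_boundary_def chain_map_diff chain_map_of ends sides)
    finally show ?case .
  next
    case (diff a b)
    then show ?case
      by (simp add: chain_boundary_diff chain_map_diff prism_diff)
  qed (simp add: prism_def)
qed

lemma chain_boundary_prism_model: "chain_boundary (Suc q) (prism_model q) = cylinder_boundary q"
proof (induction q)
  case 0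
  have "cylinder_boundary 0 = frag_of (cylinder_end 1 0) - frag_of (cylinder_end 0 0)"
    by (simp add: cylinder_boundary_def chain_boundary_of prism_def)
  then show ?case
    using chain_boundary_simplicial_cone [OF simplicial_chain_cylinder_boundary [of 0]]
    by (simp add: prism_model_eq frag_extend_diff)
next
  case (Suc q)
  let ?\<iota> = "frag_of (restrict id (standard_simplex (Suc q)))"
  have \<iota>: "singular_chain (Suc q) (subtopology (powertop_real UNIV) (standard_simplex (Suc q))) ?\<iota>"
    by (simp add: singular_chain_of simplicial_imp_singular_simplex)
  have ends: "chain_boundary (Suc q) (frag_of (cylinder_end t (Suc q)))
                = chain_map q (cylinder_point t) (chain_boundary (Suc q) ?\<iota>)" for t
  proof -
    have "simplex_map (Suc q) (cylinder_point t) (restrict id (standard_simplex (Suc q))) = cylinder_end t (Suc q)"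
      unfolding simplex_map_def cylinder_end_def by (rule restrict_ext) simp
    then have "frag_of (cylinder_end t (Suc q)) = chain_map (Suc q) (cylinder_point t) ?\<iota>"
      by simp
    then show ?thesis
      using chain_boundary_chain_map [OF \<iota>] by simp
  qed
  have "chain_boundary (Suc q) (prism (\<lambda>(t, x). cylinder_point t x) q (chain_boundary (Suc q) ?\<iota>))
          = chain_map q (cylinder_point 1) (chain_boundary (Suc q) ?\<iota>)
            - chain_map q (cylinder_point 0) (chain_boundary (Suc q) ?\<iota>)"
    using chain_boundary_prism_if_model [OF Suc.IH continuous_map_cylinder_point singular_chain_boundary_alt [OF \<iota>]]
      chain_boundary_boundary_alt [OF \<iota>]
    by (simp add: prism_def)
  then have "chain_boundary (Suc q) (cylinder_boundary (Suc q)) = 0"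
    by (simp add: cylinder_boundary_def chain_boundary_diff ends)
  then show ?case
    using chain_boundary_simplicial_cone [OF simplicial_chain_cylinder_boundary [of "Suc q"]]
    by (simp add: prism_model_eq simplicial_cone_def)
qed

lemma chain_boundary_prism:
  assumes "continuous_map (prod_topology (top_of_set {0..1}) S) U h" "singular_chain q S c"
  shows "chain_boundary (Suc q) (prism h q c)
           = chain_map q (\<lambda>x. h (1, x)) c - chain_map q (\<lambda>x. h (0, x)) c - prism h (q - 1) (chain_boundary q c)"
  by (rule chain_boundary_prism_if_model [OF chain_boundary_prism_model assms])


lemma eval_cochain_prism_boundary:
  assumes h: "continuous_map (prod_topology (top_of_set {0..1}) S) X h"
    and h0: "continuous_map S (subtopology X A) (\<lambda>x. h (0, x))"
    and c: "relcocycle p X A c" and \<sigma>: "singular_simplex p S \<sigma>"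
  shows "c (simplex_map p (\<lambda>x. h (1, x)) \<sigma>) = eval_cochain c (prism h (p - 1) (chain_boundary p (frag_of \<sigma>)))"
proof -
  have \<sigma>c: "singular_chain p S (frag_of \<sigma>)"
    using \<sigma> by (simp add: singular_chain_of)
  have "eval_cochain c (chain_boundary (Suc p) (prism h p (frag_of \<sigma>)))
          = eval_cochain (coboundary p X c) (prism h p (frag_of \<sigma>))"
    using singular_chain_prism [OF h \<sigma>c] by (simp add: eval_cochain_coboundary)
  also have "\<dots> = 0"
    using c by (simp add: relcocycle_def eval_cochain_def)
  finally have "eval_cochain c (chain_boundary (Suc p) (prism h p (frag_of \<sigma>))) = 0" .
  moreover have "c (simplex_map p (\<lambda>x. h (0, x)) \<sigma>) = 0"
    using c singular_simplex_simplex_map [OF \<sigma> h0] by (auto simp: relcocycle_def relcochain_def)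
  ultimately show ?thesis
    using chain_boundary_prism [OF h \<sigma>c] by (simp add: eval_cochain_diff)
qed

lemma rel_inessential_pullback_agrees_with_relcoboundary:
  assumes "rel_inessential B U C X A f" and c: "relcocycle p X A c"
  obtains e where "relcoboundary p B C e"
    "\<And>\<sigma>. singular_simplex p (subtopology B U) \<sigma> \<Longrightarrow> pullback p B f c \<sigma> = e \<sigma>"
proof -
  obtain K where K: "continuous_map (prod_topology (subtopology B U) (top_of_set {0..1::real})) X K"
    and K1: "\<And>x. x \<in> topspace B \<inter> U \<Longrightarrow> K (x, 1) = f x"
    and K0: "\<And>x. x \<in> topspace B \<inter> U \<Longrightarrow> K (x, 0) \<in> A"
    and KC: "\<And>x t. x \<in> topspace B \<inter> U \<inter> C \<Longrightarrow> t \<in> {0..1} \<Longrightarrow> K (x, t) \<in> A"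
    using assms(1) unfolding rel_inessential_def by blast
  define S where "S = subtopology B U"
  define h where "h = (\<lambda>(t, x). K (x, t))"
  have h: "continuous_map (prod_topology (top_of_set {0..1}) S) X h"
    using continuous_map_compose [OF continuous_map_pairedI [OF continuous_map_snd continuous_map_fst] K]
    by (simp add: h_def S_def o_def case_prod_unfold)
  have hC: "continuous_map (prod_topology (top_of_set {0..1}) (subtopology S C)) (subtopology X A) h"
    unfolding continuous_map_in_subtopology prod_topology_subtopology(2)
  proof
    show "continuous_map (subtopology (prod_topology (top_of_set {0..1}) S) (topspace (top_of_set {0..1}) \<times> C)) X h"
      by (rule continuous_map_from_subtopology [OF h])
  qed (auto simp: h_def S_def KC)
  have h0: "continuous_map S (subtopology X A) (\<lambda>x. h (0, x))"
    unfolding continuous_map_in_subtopology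
  proof
    show "continuous_map S X (\<lambda>x. h (0, x))"
      using continuous_map_compose [OF continuous_map_pairedI [OF continuous_map_const [THEN iffD2] continuous_map_id] h]
      by (simp add: o_def)
  qed (auto simp: h_def S_def K0)
  have key: "c (simplex_map p f \<sigma>) = eval_cochain c (prism h (p - 1) (chain_boundary p (frag_of \<sigma>)))"
    if \<sigma>: "singular_simplex p S \<sigma>" for \<sigma>
  proof -
    have "simplex_map p f \<sigma> = simplex_map p (\<lambda>x. h (1, x)) \<sigma>"
      by (rule simplex_map_eq [OF \<sigma>]) (simp add: h_def S_def K1)
    then show ?thesis
      using eval_cochain_prism_boundary [OF h h0 c \<sigma>] by simp
  qed
  show ?thesis
  proof (cases p)
    case 0
    show ?thesis
    proof (rule that [OF relcoboundary_zero])
      fix \<sigma> assume "singular_simplex p (subtopology B U) \<sigma>"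
      then show "pullback p B f c \<sigma> = 0"
        using key [of \<sigma>] 0 by (simp add: pullback_def S_def chain_boundary_of prism_def singular_simplex_subtopology)
    qed
  next
    case (Suc q)
    define b where "b \<tau> = (if singular_simplex q S \<tau> then eval_cochain c (prism h q (frag_of \<tau>)) else 0)" for \<tau>
    have brel: "relcochain q B C b"
      unfolding relcochain_def cochain_def
    proof (intro conjI allI impI)
      fix \<tau> assume "\<not> singular_simplex q B \<tau>"
      then show "b \<tau> = 0"
        by (simp add: b_def S_def singular_simplex_subtopology)
    next
      fix \<tau> assume \<tau>: "singular_simplex q (subtopology B C) \<tau>"
      show "b \<tau> = 0"
      proof (cases "singular_simplex q S \<tau>")
        case True
        with \<tau> have "singular_chain q (subtopology S C) (frag_of \<tau>)"
          by (simp add: singular_chain_of singular_simplex_subtopology)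
        then have "singular_chain (Suc q) (subtopology X A) (prism h q (frag_of \<tau>))"
          by (rule singular_chain_prism [OF hC])
        then show ?thesis
          using c Suc eval_relcochain_eq_0 [of "Suc q" X A c] by (simp add: b_def relcocycle_def)
      qed (simp add: b_def)
    qed
    show ?thesis
    proof (rule that)
      show "relcoboundary p B C (coboundary q B b)"
        using relcoboundary_coboundary [OF brel] Suc by simp
    next
      fix \<sigma> assume "singular_simplex p (subtopology B U) \<sigma>"
      then have \<sigma>S: "singular_simplex (Suc q) S \<sigma>" and \<sigma>B: "singular_simplex (Suc q) B \<sigma>"
        using Suc by (simp_all add: S_def singular_simplex_subtopology)
      have "singular_chain q S (chain_boundary (Suc q) (frag_of \<sigma>))"
        using singular_chain_boundary_alt [of q S "frag_of \<sigma>"] \<sigma>S by (simp add: singular_chain_of)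
      then have faces: "\<And>\<tau>. \<tau> \<in> Poly_Mapping.keys (chain_boundary (Suc q) (frag_of \<sigma>)) \<Longrightarrow> singular_simplex q S \<tau>"
        by (auto simp: singular_chain_def)
      have "pullback p B f c \<sigma> = eval_cochain c (prism h q (chain_boundary (Suc q) (frag_of \<sigma>)))"
        using key [OF \<sigma>S [folded Suc]] \<sigma>B Suc by (simp add: pullback_def)
      also have "\<dots> = eval_cochain (\<lambda>\<tau>. eval_cochain c (prism h q (frag_of \<tau>))) (chain_boundary (Suc q) (frag_of \<sigma>))"
        by (simp add: prism_def eval_cochain_frag_extend)
      also have "\<dots> = eval_cochain b (chain_boundary (Suc q) (frag_of \<sigma>))"
        by (rule eval_cochain_cong) (simp add: b_def faces)
      also have "\<dots> = coboundary q B b \<sigma>"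
        using \<sigma>B by (simp add: coboundary_eq_eval_cochain)
      finally show "pullback p B f c \<sigma> = coboundary q B b \<sigma>" .
    qed
  qed
qed


lemma additive_eq_frag_extend:
  assumes "\<And>a b. F (a - b) = F a - F b"
  shows "F x = frag_extend (\<lambda>\<sigma>. F (frag_of \<sigma>)) x"
proof -
  have F0: "F 0 = 0"
    using assms [of 0 0] by simp
  have "Poly_Mapping.keys x \<subseteq> UNIV"
    by simp
  then show ?thesis
    by (induction x rule: frag_induction) (auto simp: F0 assms frag_extend_diff)
qed

lemma frag_extend_diff_fun: "frag_extend f c - frag_extend g c = frag_extend (\<lambda>x. f x - g x) c"
proof -
  have "Poly_Mapping.keys c \<subseteq> UNIV"
    by simp
  then show ?thesis
    by (induction c rule: frag_induction) (auto simp: frag_extend_diff algebra_simps)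
qed

lemma keys_chain_boundary_of:
  "\<tau> \<in> Poly_Mapping.keys (chain_boundary p (frag_of \<sigma>)) \<Longrightarrow> \<exists>k\<le>p. \<tau> = singular_face p k \<sigma>"
proof -
  have "Poly_Mapping.keys (frag_cmul ((-1) ^ k) (frag_of (singular_face p k \<sigma>))) \<subseteq> {singular_face p k \<sigma>}" for k
    using keys_cmul by (metis keys_frag_of)
  then have "Poly_Mapping.keys (chain_boundary p (frag_of \<sigma>)) \<subseteq> (\<Union>k\<le>p. {singular_face p k \<sigma>})"
    unfolding chain_boundary_of by (auto intro!: order_trans [OF keys_sum] UN_mono)
  then show "\<tau> \<in> Poly_Mapping.keys (chain_boundary p (frag_of \<sigma>)) \<Longrightarrow> \<exists>k\<le>p. \<tau> = singular_face p k \<sigma>"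
    by blast
qed

lemma singular_chain_iterated_subdivision:
  "singular_chain p X c \<Longrightarrow> singular_chain p X ((singular_subdivision p ^^ i) c)"
  by (induction i) (auto simp: singular_chain_singular_subdivision)

lemma chain_boundary_iterated_subdivision:
  assumes "singular_chain p X c"
  shows "chain_boundary p ((singular_subdivision p ^^ i) c) = (singular_subdivision (p - 1) ^^ i) (chain_boundary p c)"
proof (induction i)
  case (Suc i)
  then show ?case
    using chain_boundary_singular_subdivision [OF singular_chain_iterated_subdivision [OF assms, of i]] by simp
qed simp

definition small_chain :: "'a topology \<Rightarrow> 'a set set \<Rightarrow> nat \<Rightarrow> 'a chain \<Rightarrow> bool" where
  "small_chain X \<U> p c \<longleftrightarrow> (\<forall>\<sigma>\<in>Poly_Mapping.keys c. \<exists>V\<in>\<U>. singular_simplex p (subtopology X V) \<sigma>)"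

lemma small_chain_diff: "small_chain X \<U> p a \<Longrightarrow> small_chain X \<U> p b \<Longrightarrow> small_chain X \<U> p (a - b)"
  unfolding small_chain_def using keys_diff [of a b] by blast

lemma small_chain_sum: "(\<And>i. i \<in> I \<Longrightarrow> small_chain X \<U> p (f i)) \<Longrightarrow> small_chain X \<U> p (sum f I)"
  unfolding small_chain_def using keys_sum [of f I] by blast

lemma small_chain_frag_extend:
  "(\<And>\<sigma>. \<sigma> \<in> Poly_Mapping.keys c \<Longrightarrow> small_chain X \<U> p (f \<sigma>)) \<Longrightarrow> small_chain X \<U> p (frag_extend f c)"
  unfolding small_chain_def using keys_frag_extend [of f c] by blast

lemma small_chain_additive_image:
  assumes "\<And>a b. F (a - b) = F a - F b"
    and "\<And>V \<sigma>. V \<in> \<U> \<Longrightarrow> singular_simplex p (subtopology X V) \<sigma>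
                  \<Longrightarrow> singular_chain q (subtopology X V) (F (frag_of \<sigma>))"
    and "small_chain X \<U> p c"
  shows "small_chain X \<U> q (F c)"
proof -
  have "small_chain X \<U> q (frag_extend (\<lambda>\<sigma>. F (frag_of \<sigma>)) c)"
  proof (rule small_chain_frag_extend)
    fix \<sigma> assume "\<sigma> \<in> Poly_Mapping.keys c"
    then obtain V where "V \<in> \<U>" "singular_simplex p (subtopology X V) \<sigma>"
      using assms(3) by (auto simp: small_chain_def)
    then show "small_chain X \<U> q (F (frag_of \<sigma>))"
      using assms(2) by (fastforce simp: small_chain_def singular_chain_def)
  qed
  then show ?thesis
    by (simp flip: additive_eq_frag_extend [of F, OF assms(1)])
qed

definition subdivision_threshold :: "'a topology \<Rightarrow> 'a set set \<Rightarrow> nat \<Rightarrow> ((nat \<Rightarrow> real) \<Rightarrow> 'a) \<Rightarrow> nat" where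
  "subdivision_threshold X \<U> p \<sigma> =
     (LEAST n. \<forall>m\<ge>n. small_chain X \<U> p ((singular_subdivision p ^^ m) (frag_of \<sigma>)))"

lemma small_chain_iterated_subdivision:
  assumes \<U>: "\<And>V. V \<in> \<U> \<Longrightarrow> openin X V" "topspace X \<subseteq> \<Union>\<U>"
    and \<sigma>: "singular_simplex p X \<sigma>" and m: "subdivision_threshold X \<U> p \<sigma> \<le> m"
  shows "small_chain X \<U> p ((singular_subdivision p ^^ m) (frag_of \<sigma>))"
proof -
  have \<sigma>c: "singular_chain p X (frag_of \<sigma>)"
    using \<sigma> by (simp add: singular_chain_of)
  obtain n where n: "\<And>m \<tau>. \<lbrakk>n \<le> m; \<tau> \<in> Poly_Mapping.keys ((singular_subdivision p ^^ m) (frag_of \<sigma>))\<rbrakk>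
                       \<Longrightarrow> \<exists>V \<in> \<U>. \<tau> \<in> standard_simplex p \<rightarrow> V"
    using sufficient_iterated_singular_subdivision_exists [OF \<U> \<sigma>c] by blast
  have "\<forall>m\<ge>n. small_chain X \<U> p ((singular_subdivision p ^^ m) (frag_of \<sigma>))"
    unfolding small_chain_def
  proof (intro allI impI ballI)
    fix m \<tau> assume "n \<le> m" and \<tau>: "\<tau> \<in> Poly_Mapping.keys ((singular_subdivision p ^^ m) (frag_of \<sigma>))"
    then obtain V where "V \<in> \<U>" "\<tau> \<in> standard_simplex p \<rightarrow> V"
      using n by blast
    moreover have "singular_simplex p X \<tau>"
      using singular_chain_iterated_subdivision [OF \<sigma>c, of m] \<tau> by (auto simp: singular_chain_def)
    ultimately show "\<exists>V\<in>\<U>. singular_simplex p (subtopology X V) \<tau>"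
      by (auto simp: singular_simplex_subtopology)
  qed
  then have "\<forall>m'\<ge>subdivision_threshold X \<U> p \<sigma>. small_chain X \<U> p ((singular_subdivision p ^^ m') (frag_of \<sigma>))"
    unfolding subdivision_threshold_def by (rule LeastI)
  with m show ?thesis
    by blast
qed

text \<open>The number of subdivisions applied to a simplex must dominate the numbers applied to its faces.\<close>
fun subdivision_depth :: "'a topology \<Rightarrow> 'a set set \<Rightarrow> nat \<Rightarrow> ((nat \<Rightarrow> real) \<Rightarrow> 'a) \<Rightarrow> nat" where
  "subdivision_depth X \<U> 0 \<sigma> = subdivision_threshold X \<U> 0 \<sigma>"
| "subdivision_depth X \<U> (Suc p) \<sigma> =
     max (subdivision_threshold X \<U> (Suc p) \<sigma>)
         (Max ((\<lambda>k. subdivision_depth X \<U> p (singular_face (Suc p) k \<sigma>)) ` {..Suc p}))"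

lemma subdivision_threshold_le_depth: "subdivision_threshold X \<U> p \<sigma> \<le> subdivision_depth X \<U> p \<sigma>"
  by (cases p) auto

lemma subdivision_depth_face:
  assumes "\<tau> \<in> Poly_Mapping.keys (chain_boundary p (frag_of \<sigma>))"
  shows "subdivision_depth X \<U> (p - 1) \<tau> \<le> subdivision_depth X \<U> p \<sigma>"
proof (cases p)
  case 0
  then show ?thesis
    using assms by (simp add: chain_boundary_of)
next
  case (Suc q)
  then obtain k where k: "k \<le> Suc q" "\<tau> = singular_face (Suc q) k \<sigma>"
    using keys_chain_boundary_of [OF assms] by blast
  then have "subdivision_depth X \<U> q \<tau>
               \<le> Max ((\<lambda>k. subdivision_depth X \<U> q (singular_face (Suc q) k \<sigma>)) ` {..Suc q})"
    by (intro Max_ge) auto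
  then show ?thesis
    using Suc by simp
qed


lemma small_chain_homotopy:
  assumes \<U>: "\<And>V. V \<in> \<U> \<Longrightarrow> openin X V" "topspace X \<subseteq> \<Union>\<U>"
  obtains D :: "nat \<Rightarrow> 'a chain \<Rightarrow> 'a chain" where
    "\<And>p a b. D p (a - b) = D p a - D p b"
    "\<And>p Y c. singular_chain p Y c \<Longrightarrow> singular_chain (Suc p) Y (D p c)"
    "\<And>p \<sigma>. singular_simplex p X \<sigma> \<Longrightarrow>
       small_chain X \<U> p (frag_of \<sigma> + chain_boundary (Suc p) (D p (frag_of \<sigma>)) + D (p - 1) (chain_boundary p (frag_of \<sigma>)))"
proof -
  obtain h :: "nat \<Rightarrow> 'a chain \<Rightarrow> 'a chain"
    where h_diff: "\<And>p a b. h p (a - b) = h p a - h p b"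
      and h_chain: "\<And>p Y c. singular_chain p Y c \<Longrightarrow> singular_chain (Suc p) Y (h p c)"
      and h_boundary: "\<And>p Y c. singular_chain p Y c \<Longrightarrow>
              chain_boundary (Suc p) (h p c) + h (p - Suc 0) (chain_boundary p c) = singular_subdivision p c - c"
    by (rule chain_homotopic_singular_subdivision) blast
  define sd :: "nat \<Rightarrow> nat \<Rightarrow> 'a chain \<Rightarrow> 'a chain" where "sd p i = singular_subdivision p ^^ i" for p i
  define D where "D p = frag_extend (\<lambda>\<sigma>. \<Sum>i<subdivision_depth X \<U> p \<sigma>. h p (sd p i (frag_of \<sigma>)))" for p
  have sd_diff: "sd p i (a - b) = sd p i a - sd p i b" for p i a b
    by (simp add: sd_def singular_subdivision_power_diff)
  show thesis
  proof (rule that)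
    show "D p (a - b) = D p a - D p b" for p a b
      by (simp add: D_def frag_extend_diff)
    show "singular_chain (Suc p) Y (D p c)" if "singular_chain p Y c" for p Y c
      unfolding D_def
    proof (rule singular_chain_extend)
      fix \<sigma> assume "\<sigma> \<in> Poly_Mapping.keys c"
      then have "singular_chain p Y (frag_of \<sigma>)"
        using that by (simp add: singular_chain_def singular_chain_of subset_iff)
      then show "singular_chain (Suc p) Y (\<Sum>i<subdivision_depth X \<U> p \<sigma>. h p (sd p i (frag_of \<sigma>)))"
        by (intro singular_chain_sum h_chain) (simp add: sd_def singular_chain_iterated_subdivision)
    qed
  next
    fix p \<sigma> assume \<sigma>: "singular_simplex p X \<sigma>"
    define N where "N = subdivision_depth X \<U> p \<sigma>"
    have \<sigma>c: "singular_chain p X (frag_of \<sigma>)"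
      using \<sigma> by (simp add: singular_chain_of)
    have faces: "singular_simplex (p - 1) X \<tau>" if "\<tau> \<in> Poly_Mapping.keys (chain_boundary p (frag_of \<sigma>))" for \<tau>
      using singular_chain_boundary [OF \<sigma>c] that by (auto simp: singular_chain_def)
    define H where "H n c = (\<Sum>i<n. h (p - 1) (sd (p - 1) i c))" for n c
    have "chain_boundary (Suc p) (D p (frag_of \<sigma>))
            = (\<Sum>i<N. sd p (Suc i) (frag_of \<sigma>) - sd p i (frag_of \<sigma>)) - H N (chain_boundary p (frag_of \<sigma>))"
    proof -
      have "chain_boundary (Suc p) (h p (sd p i (frag_of \<sigma>)))
              = sd p (Suc i) (frag_of \<sigma>) - sd p i (frag_of \<sigma>) - h (p - 1) (sd (p - 1) i (chain_boundary p (frag_of \<sigma>)))"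
        for i
        using h_boundary [OF singular_chain_iterated_subdivision [OF \<sigma>c, of i]]
          chain_boundary_iterated_subdivision [OF \<sigma>c, of i]
        by (simp add: sd_def algebra_simps)
      then show ?thesis
        by (simp add: D_def N_def H_def chain_boundary_sum sum_subtractf)
    qed
    also have "\<dots> = sd p N (frag_of \<sigma>) - frag_of \<sigma> - H N (chain_boundary p (frag_of \<sigma>))"
      using sum_lessThan_telescope [of "\<lambda>i. sd p i (frag_of \<sigma>)" N] by (simp add: sd_def)
    finally have boundary_D: "frag_of \<sigma> + chain_boundary (Suc p) (D p (frag_of \<sigma>))
                                = sd p N (frag_of \<sigma>) - H N (chain_boundary p (frag_of \<sigma>))"
      by simp
    have "H N (chain_boundary p (frag_of \<sigma>)) - D (p - 1) (chain_boundary p (frag_of \<sigma>))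
            = frag_extend (\<lambda>\<tau>. \<Sum>i\<in>{subdivision_depth X \<U> (p - 1) \<tau>..<N}. h (p - 1) (sd (p - 1) i (frag_of \<tau>)))
                (chain_boundary p (frag_of \<sigma>))"
    proof -
      have "H N (chain_boundary p (frag_of \<sigma>)) = frag_extend (\<lambda>\<tau>. H N (frag_of \<tau>)) (chain_boundary p (frag_of \<sigma>))"
        by (rule additive_eq_frag_extend) (simp add: H_def h_diff sd_diff sum_subtractf)
      then have "H N (chain_boundary p (frag_of \<sigma>)) - D (p - 1) (chain_boundary p (frag_of \<sigma>))
          = frag_extend (\<lambda>\<tau>. H N (frag_of \<tau>) - (\<Sum>i<subdivision_depth X \<U> (p - 1) \<tau>. h (p - 1) (sd (p - 1) i (frag_of \<tau>))))
              (chain_boundary p (frag_of \<sigma>))"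
        by (simp only: D_def frag_extend_diff_fun)
      also have "\<dots> = frag_extend (\<lambda>\<tau>. \<Sum>i\<in>{subdivision_depth X \<U> (p - 1) \<tau>..<N}. h (p - 1) (sd (p - 1) i (frag_of \<tau>)))
                         (chain_boundary p (frag_of \<sigma>))"
      proof (rule frag_extend_eq)
        fix \<tau> assume "\<tau> \<in> Poly_Mapping.keys (chain_boundary p (frag_of \<sigma>))"
        then show "H N (frag_of \<tau>) - (\<Sum>i<subdivision_depth X \<U> (p - 1) \<tau>. h (p - 1) (sd (p - 1) i (frag_of \<tau>)))
                     = (\<Sum>i\<in>{subdivision_depth X \<U> (p - 1) \<tau>..<N}. h (p - 1) (sd (p - 1) i (frag_of \<tau>)))"
          using subdivision_depth_face [of \<tau> p \<sigma> X \<U>]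
          by (simp add: H_def N_def atLeast0LessThan [symmetric] flip: sum.atLeastLessThan_concat [of 0])
      qed
      finally show ?thesis .
    qed
    moreover have "small_chain X \<U> p (h (p - 1) (sd (p - 1) i (frag_of \<tau>)))"
      if "\<tau> \<in> Poly_Mapping.keys (chain_boundary p (frag_of \<sigma>))" "subdivision_depth X \<U> (p - 1) \<tau> \<le> i" for \<tau> i
    proof -
      have "p \<noteq> 0"
        using that(1) by (cases "p = 0") (simp_all add: chain_boundary_of)
      have "small_chain X \<U> (p - 1) (sd (p - 1) i (frag_of \<tau>))"
        using small_chain_iterated_subdivision [OF \<U> faces [OF that(1)] le_trans [OF subdivision_threshold_le_depth that(2)]]
        by (simp add: sd_def)
      then have "small_chain X \<U> (Suc (p - 1)) (h (p - 1) (sd (p - 1) i (frag_of \<tau>)))"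
        by (rule small_chain_additive_image [OF h_diff, rotated]) (auto intro: h_chain simp: singular_chain_of)
      with \<open>p \<noteq> 0\<close> show ?thesis
        by simp
    qed
    moreover have "small_chain X \<U> p (sd p N (frag_of \<sigma>))"
      using small_chain_iterated_subdivision [OF \<U> \<sigma> subdivision_threshold_le_depth]
      by (simp add: sd_def N_def)
    ultimately show "small_chain X \<U> p (frag_of \<sigma> + chain_boundary (Suc p) (D p (frag_of \<sigma>))
                                            + D (p - 1) (chain_boundary p (frag_of \<sigma>)))"
      unfolding boundary_D
      by (auto simp: algebra_simps intro!: small_chain_diff small_chain_frag_extend small_chain_sum)
  qed
qed


lemma relcoboundary_if_vanishes_on_small_simplices:
  assumes \<U>: "\<And>V. V \<in> \<U> \<Longrightarrow> openin X V" "topspace X \<subseteq> \<Union>\<U>"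
    and z: "relcocycle n X A z"
    and small: "\<And>V \<sigma>. V \<in> \<U> \<Longrightarrow> singular_simplex n (subtopology X V) \<sigma> \<Longrightarrow> z \<sigma> = 0"
  shows "relcoboundary n X A z"
proof -
  obtain D :: "nat \<Rightarrow> 'a chain \<Rightarrow> 'a chain"
    where D_diff: "\<And>p a b. D p (a - b) = D p a - D p b"
      and D_chain: "\<And>p Y c. singular_chain p Y c \<Longrightarrow> singular_chain (Suc p) Y (D p c)"
      and D_small: "\<And>p \<sigma>. singular_simplex p X \<sigma> \<Longrightarrow>
          small_chain X \<U> p (frag_of \<sigma> + chain_boundary (Suc p) (D p (frag_of \<sigma>)) + D (p - 1) (chain_boundary p (frag_of \<sigma>)))"
    using small_chain_homotopy [OF \<U>] by metis
  have z_chain: "relcochain n X A z" "coboundary n X z = (\<lambda>\<sigma>. 0)"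
    using z by (auto simp: relcocycle_def)
  have z_faces: "z \<sigma> + eval_cochain z (D (n - 1) (chain_boundary n (frag_of \<sigma>))) = 0"
    if \<sigma>: "singular_simplex n X \<sigma>" for \<sigma>
  proof -
    have "eval_cochain z (chain_boundary (Suc n) (D n (frag_of \<sigma>))) = eval_cochain (coboundary n X z) (D n (frag_of \<sigma>))"
      using D_chain [of n X "frag_of \<sigma>"] \<sigma> by (simp add: singular_chain_of eval_cochain_coboundary)
    then have "eval_cochain z (chain_boundary (Suc n) (D n (frag_of \<sigma>))) = 0"
      by (simp add: z_chain eval_cochain_def)
    moreover have "eval_cochain z (frag_of \<sigma> + chain_boundary (Suc n) (D n (frag_of \<sigma>))
                                    + D (n - 1) (chain_boundary n (frag_of \<sigma>))) = 0"
      using D_small [OF \<sigma>] small by (intro eval_cochain_eq_0) (auto simp: small_chain_def)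
    ultimately show ?thesis
      by (simp add: eval_cochain_add)
  qed
  show ?thesis
  proof (cases n)
    case 0
    have "D 0 0 = 0"
      using D_diff [of 0 0 0] by simp
    then have "z = (\<lambda>\<sigma>. 0)"
      using z_faces z_chain(1) 0 by (auto simp: fun_eq_iff chain_boundary_of relcochain_def cochain_def)
    then show ?thesis
      by (simp add: relcoboundary_zero)
  next
    case (Suc q)
    define b where "b \<tau> = (if singular_simplex q X \<tau> then - eval_cochain z (D q (frag_of \<tau>)) else 0)" for \<tau>
    have "relcochain q X A b"
      unfolding relcochain_def cochain_def
    proof (intro conjI allI impI)
      fix \<tau> assume "singular_simplex q (subtopology X A) \<tau>"
      then have "singular_chain (Suc q) (subtopology X A) (D q (frag_of \<tau>))"
        by (intro D_chain) (simp add: singular_chain_of)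
      then show "b \<tau> = 0"
        using eval_relcochain_eq_0 [OF z_chain(1)] Suc by (simp add: b_def)
    qed (simp add: b_def)
    moreover have "z = coboundary q X b"
    proof
      fix \<sigma>
      show "z \<sigma> = coboundary q X b \<sigma>"
      proof (cases "singular_simplex n X \<sigma>")
        case True
        have "singular_chain q X (chain_boundary (Suc q) (frag_of \<sigma>))"
          using True Suc singular_chain_boundary_alt [of q X "frag_of \<sigma>"] by (simp add: singular_chain_of)
        then have faces: "\<And>\<tau>. \<tau> \<in> Poly_Mapping.keys (chain_boundary (Suc q) (frag_of \<sigma>)) \<Longrightarrow> singular_simplex q X \<tau>"
          by (auto simp: singular_chain_def)
        have "coboundary q X b \<sigma> = eval_cochain b (chain_boundary (Suc q) (frag_of \<sigma>))"
          using True Suc by (simp add: coboundary_eq_eval_cochain)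
        also have "\<dots> = - eval_cochain (\<lambda>\<tau>. eval_cochain z (D q (frag_of \<tau>))) (chain_boundary (Suc q) (frag_of \<sigma>))"
          by (simp add: eval_cochain_def b_def faces sum_negf cong: sum.cong)
        also have "\<dots> = - eval_cochain z (D q (chain_boundary (Suc q) (frag_of \<sigma>)))"
          using additive_eq_frag_extend [of "D q" "chain_boundary (Suc q) (frag_of \<sigma>)", OF D_diff]
          by (simp add: eval_cochain_frag_extend)
        also have "\<dots> = z \<sigma>"
          using z_faces [OF True] Suc by (simp add: add_eq_0_iff)
        finally show ?thesis
          by simp
      next
        case False
        then show ?thesis
          using z_chain(1) Suc by (simp add: relcochain_def cochain_def coboundary_def)
      qed
    qed
    ultimately show ?thesis
      using Suc by (simp add: relcoboundary_coboundary)
  qed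
qed


lemma image_power_zero_if_rel_inessential_cover:
  fixes B :: "'b topology" and X :: "'a topology" and f :: "'b \<Rightarrow> 'a"
  assumes f: "continuous_map B X f" "f ` C \<subseteq> A"
    and U: "\<forall>i\<le>l. openin B (U i)" "(\<Union>i\<le>l. U i) = topspace B"
    and inessential: "\<forall>i\<le>l. rel_inessential B (U i) C X A f"
  shows "image_power_zero TYPE('r::comm_ring_1) B C X A f (Suc l)"
  unfolding image_power_zero_def
proof (intro allI impI)
  fix cs :: "(nat \<times> (((nat \<Rightarrow> real) \<Rightarrow> 'a) \<Rightarrow> 'r)) list"
  assume len: "length cs = Suc l" and cocycles: "\<forall>(p, c)\<in>set cs. relcocycle p X A c"
  define deg where "deg i = fst (cs ! i)" for i
  define pb where "pb i = pullback (deg i) B f (snd (cs ! i))" for i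
  have c: "relcocycle (deg i) X A (snd (cs ! i))" if "i \<le> l" for i
    using cocycles nth_mem [of i cs] len that by (auto simp: deg_def case_prod_unfold)
  have "\<exists>e. relcoboundary (deg i) B C e \<and>
           (\<forall>\<sigma>. singular_simplex (deg i) (subtopology B (U i)) \<sigma> \<longrightarrow> pb i \<sigma> = e \<sigma>)" if i: "i \<le> l" for i
  proof -
    obtain e where "relcoboundary (deg i) B C e"
      "\<And>\<sigma>. singular_simplex (deg i) (subtopology B (U i)) \<sigma> \<Longrightarrow> pullback (deg i) B f (snd (cs ! i)) \<sigma> = e \<sigma>"
      using rel_inessential_pullback_agrees_with_relcoboundary [OF inessential [rule_format, OF i] c [OF i]] by blast
    then show ?thesis
      unfolding pb_def by blast
  qed
  then have "\<forall>i. \<exists>e. i \<le> l \<longrightarrow> relcoboundary (deg i) B C e \<and>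
               (\<forall>\<sigma>. singular_simplex (deg i) (subtopology B (U i)) \<sigma> \<longrightarrow> pb i \<sigma> = e \<sigma>)"
    by blast
  then have "\<exists>E. \<forall>i. i \<le> l \<longrightarrow> relcoboundary (deg i) B C (E i) \<and>
               (\<forall>\<sigma>. singular_simplex (deg i) (subtopology B (U i)) \<sigma> \<longrightarrow> pb i \<sigma> = E i \<sigma>)"
    by (rule choice)
  then obtain E where "\<forall>i. i \<le> l \<longrightarrow> relcoboundary (deg i) B C (E i) \<and>
            (\<forall>\<sigma>. singular_simplex (deg i) (subtopology B (U i)) \<sigma> \<longrightarrow> pb i \<sigma> = E i \<sigma>)"
    by blast
  then have E: "\<And>i. i \<le> l \<Longrightarrow> relcoboundary (deg i) B C (E i)"
    and pb_E: "\<And>i \<sigma>. i \<le> l \<Longrightarrow> singular_simplex (deg i) (subtopology B (U i)) \<sigma> \<Longrightarrow> pb i \<sigma> = E i \<sigma>"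
    by blast+
  define z where "z i = (\<lambda>s. pb i s - E i s)" for i
  define N where "N = sum_list (map deg [0..<Suc l])"
  define P where "P = snd (cup_list B (map (\<lambda>i. (deg i, pb i)) [0..<Suc l]))"
  define Z where "Z = snd (cup_list B (map (\<lambda>i. (deg i, z i)) [0..<Suc l]))"
  have pb: "relcocycle (deg i) B C (pb i)" if "i \<le> l" for i
    unfolding pb_def by (rule pullback_relcocycle [OF f c [OF that]])
  have z: "relcocycle (deg i) B C (z i)" if "i \<le> l" for i
    unfolding z_def by (rule relcocycle_diff [OF pb [OF that] relcoboundary_imp_relcocycle [OF E [OF that]]])
  have "relcoboundary N B C (\<lambda>s. P s - Z s)"
    unfolding N_def P_def Z_def
  proof (rule relcoboundary_cup_list_diff)
    fix i assume "i \<in> set [0..<Suc l]"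
    then have i: "i \<le> l"
      by auto
    have "(\<lambda>s. pb i s - z i s) = E i"
      by (simp add: z_def)
    then show "relcocycle (deg i) B C (pb i) \<and> relcocycle (deg i) B C (z i)
                 \<and> relcoboundary (deg i) B C (\<lambda>s. pb i s - z i s)"
      using pb [OF i] z [OF i] E [OF i] by simp
  qed
  moreover have "relcoboundary N B C Z"
  proof (rule relcoboundary_if_vanishes_on_small_simplices)
    have "relcocycle (fst (cup_list B (map (\<lambda>i. (deg i, z i)) [0..<Suc l]))) B C Z"
      unfolding Z_def by (rule relcocycle_cup_list) (auto simp: z less_Suc_eq_le simp del: upt_Suc)
    then show "relcocycle N B C Z"
      by (simp add: N_def fst_cup_list o_def del: upt_Suc)
    show "Z \<sigma> = 0" if V_in: "V \<in> U ` {..l}" and \<sigma>: "singular_simplex N (subtopology B V) \<sigma>" for V \<sigma>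
    proof -
      obtain i where i: "i \<le> l" and V: "V = U i"
        using V_in by blast
      have "z i \<tau> = 0" if "singular_simplex (deg i) (subtopology B V) \<tau>" for \<tau>
        using pb_E [OF i] that by (simp add: z_def V)
      then show ?thesis
        unfolding Z_def
      proof (rule cup_list_vanishes [rotated])
        show "i \<in> set [0..<Suc l]"
          using i by (simp del: upt_Suc)
        show "singular_simplex (sum_list (map deg [0..<Suc l])) (subtopology B V) \<sigma>"
          using \<sigma> by (simp add: N_def)
      qed
    qed
  qed (use U in auto)
  ultimately have "relcoboundary N B C (\<lambda>s. (P s - Z s) + Z s)"
    by (rule relcoboundary_add)
  then have "relcoboundary N B C P"
    by simp
  moreover have "map (\<lambda>(p, c). (p, pullback p B f c)) cs = map (\<lambda>i. (deg i, pb i)) [0..<Suc l]"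
    by (rule nth_equalityI) (auto simp: len deg_def pb_def case_prod_unfold simp del: upt_Suc)
  ultimately show "let pr = cup_list B (map (\<lambda>(p, c). (p, pullback p B f c)) cs) in relcoboundary (fst pr) B C (snd pr)"
    by (simp add: Let_def N_def P_def fst_cup_list o_def del: upt_Suc)
qed

theorem theorem2p10:
  fixes B :: "'b topology" and C :: "'b set" and X :: "'a topology" and A :: "'a set"
    and f :: "'b \<Rightarrow> 'a"
  assumes "C \<subseteq> topspace B" and "A \<subseteq> topspace X"
    and "continuous_map B X f" and "f ` C \<subseteq> A"
  shows "nil_image TYPE('r::comm_ring_1) B C X A f \<le> relcat B C X A f"
  unfolding relcat_def
proof (rule Inf_greatest)
  fix x assume "x \<in> {enat l | l. \<exists>U :: nat \<Rightarrow> 'b set.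
       (\<forall>i\<le>l. openin B (U i)) \<and> (\<Union>i\<le>l. U i) = topspace B \<and>
       (\<forall>i\<le>l. rel_inessential B (U i) C X A f)}"
  then obtain l U where x: "x = enat l" and U: "\<forall>i\<le>l. openin B (U i)" "(\<Union>i\<le>l. U i) = topspace B"
    "\<forall>i\<le>l. rel_inessential B (U i) C X A f"
    by blast
  have "image_power_zero TYPE('r) B C X A f (Suc l)"
    by (rule image_power_zero_if_rel_inessential_cover [OF assms(3,4) U])
  then show "nil_image TYPE('r) B C X A f \<le> x"
    unfolding nil_image_def x by (intro Inf_lower) blast
qed


end
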